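(* Let $\mu\in\mathcal C$ and let $\nu\mapsto S_\nu$ be a smooth map $\mathcal C\to\mathfrak u(\mathfrak g,J)$. Suppose $\nu_t$ solves the gauged bracket flow $\dot\nu_t=-\pi(P_{\nu_t}-S_{\nu_t})\nu_t$, $\nu_0=\mu$. Then there exists a smooth family $k_t\in\mathrm U(\mathfrak g,J)$ such that $\nu_t=k_t\cdot\mu_t$, where $\mu_t$ solves the bracket flow $\dot\mu_t=-\pi(P_{\mu_t})\mu_t$, $\mu_0=\mu$.
   Context: $\mathfrak g$ is a real vector space of dimension $2n$ with complex structure $J$ and inner product $\langle\cdot,\cdot\rangle$ for which $J$ is orthogonal; $e_1,\dots,e_{2n}$ an orthonormal basis. Brackets are skew-symmetric bilinear maps $\mathfrak g\times\mathfrak g\to\mathfrak g$; $\mathcal C$ is the set of brackets satisfying the Jacobi identity and $\nu(J\cdot,\cdot)=J\nu(\cdot,\cdot)$. $\mathrm{GL}(\mathfrak g,J)$ (invertible endomorphisms commuting with $J$) acts on brackets by $h\cdot\nu=h\nu(h^{-1}\cdot,h^{-1}\cdot)$, and $\pi(A)\nu=A\nu(\cdot,\cdot)-\nu(A\cdot,\cdot)-\nu(\cdot,A\cdot)$ is the derivative of this action. $\mathrm U(\mathfrak g,J)$ is the subgroup preserving $\langle\cdot,\cdot\rangle$, with Lie algebra $\mathfrak u(\mathfrak g,J)$ of $J$-commuting skew-adjoint endomorphisms. $P_\nu:=\nu\nu^*$, i.e. $P_\nu v=\sum_{i<j}\langle v,\nu(e_i,e_j)\rangle\nu(e_i,e_j)$;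 it satisfies $P_{k\cdot\nu}=kP_\nu k^*$ for $k\in\mathrm U(\mathfrak g,J)$. *)

theory Defs
  imports "HOL-Analysis.Analysis"
begin

text \<open>The Lie algebra g is modelled as real^'n with the standard inner product
  (orthonormal basis e_i = axis i 1). A bracket nu is encoded by its values on
  basis pairs: nu $ i $ j = nu(e_i, e_j).\<close>

type_synonym 'n brkt = "real^'n^'n^'n"
type_synonym 'n endo = "real^'n^'n"

definition br :: "'n::finite brkt \<Rightarrow> real^'n \<Rightarrow> real^'n \<Rightarrow> real^'n" where
  "br \<nu> x y = (\<Sum>i\<in>UNIV. \<Sum>j\<in>UNIV. (x $ i * y $ j) *\<^sub>R (\<nu> $ i $ j))"

definition mkbr :: "(real^'n \<Rightarrow> real^'n \<Rightarrow> real^'n) \<Rightarrow> 'n::finite brkt" where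
  "mkbr f = (\<chi> i j. f (axis i 1) (axis j 1))"

text \<open>Skew-symmetry (bilinearity is built into the encoding).\<close>
definition is_bracket :: "'n::finite brkt \<Rightarrow> bool" where
  "is_bracket \<nu> \<longleftrightarrow> (\<forall>x y. br \<nu> x y = - br \<nu> y x)"

definition Cset :: "'n::finite endo \<Rightarrow> 'n brkt set" where
  "Cset J = {\<nu>. is_bracket \<nu> \<and>
      (\<forall>x y z. br \<nu> x (br \<nu> y z) + br \<nu> y (br \<nu> z x) + br \<nu> z (br \<nu> x y) = 0) \<and>
      (\<forall>x y. br \<nu> (J *v x) y = J *v br \<nu> x y)}"

text \<open>Action h . nu = h nu(h^-1 ., h^-1 .) and its derivative pi.\<close>
definition act :: "'n::finite endo \<Rightarrow> 'n brkt \<Rightarrow> 'n brkt" where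
  "act h \<nu> = mkbr (\<lambda>x y. h *v br \<nu> (matrix_inv h *v x) (matrix_inv h *v y))"

definition piop :: "'n::finite endo \<Rightarrow> 'n brkt \<Rightarrow> 'n brkt" where
  "piop A \<nu> = mkbr (\<lambda>x y. A *v br \<nu> x y - br \<nu> (A *v x) y - br \<nu> x (A *v y))"

definition Pop :: "'n::{finite,linorder} brkt \<Rightarrow> 'n endo" where
  "Pop \<nu> = matrix (\<lambda>v. \<Sum>(i,j)\<in>{(i,j). i < j}.
      (v \<bullet> br \<nu> (axis i 1) (axis j 1)) *\<^sub>R br \<nu> (axis i 1) (axis j 1))"

definition Ugrp :: "'n::finite endo \<Rightarrow> 'n endo set" where
  "Ugrp J = {k. invertible k \<and> k ** J = J ** k \<and> transpose k ** k = mat 1}"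

definition ualg :: "'n::finite endo \<Rightarrow> 'n endo set" where
  "ualg J = {A. A ** J = J ** A \<and> transpose A = - A}"

text \<open>C-infinity on an open set: all iterated directional derivatives exist and
  are continuous. D (v # vs) is the derivative of D vs in direction v.\<close>
definition smooth_on :: "'a::real_normed_vector set \<Rightarrow> ('a \<Rightarrow> 'b::real_normed_vector) \<Rightarrow> bool" where
  "smooth_on U f \<longleftrightarrow> open U \<and> (\<exists>D :: 'a list \<Rightarrow> 'a \<Rightarrow> 'b. D [] = f \<and>
     (\<forall>vs. continuous_on U (D vs)) \<and>
     (\<forall>vs v. \<forall>x\<in>U. ((\<lambda>t. D vs (x + t *\<^sub>R v)) has_vector_derivative D (v # vs) x) (at 0)))"

text \<open>Smooth curve on a time interval I (one-sided derivatives at endpoints).\<close>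
definition smooth_curve :: "real set \<Rightarrow> (real \<Rightarrow> 'b::real_normed_vector) \<Rightarrow> bool" where
  "smooth_curve I c \<longleftrightarrow> (\<exists>D :: nat \<Rightarrow> real \<Rightarrow> 'b. D 0 = c \<and>
     (\<forall>m. \<forall>t\<in>I. (D m has_vector_derivative D (Suc m) t) (at t within I)))"

end

theory Submission
  imports Defs
begin

text \<open>Since \<open>S\<^sub>\<nu>\<close> is skew-adjoint and commutes with \<open>J\<close>, the linear equation
  \<open>k' = S\<^sub>\<nu>\<^sub>t k\<close>, \<open>k\<^sub>0 = 1\<close>, has a unitary solution, and \<open>\<mu>\<^sub>t = k\<^sub>t\<^sup>-\<^sup>1 \<cdot> \<nu>\<^sub>t\<close> solves the
  bracket flow: the derivative of \<open>k\<^sub>t\<close> cancels the gauge term \<open>\<pi>(S\<^sub>\<nu>\<^sub>t) \<nu>\<^sub>t\<close>, and \<open>P\<close> is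
  equivariant under unitary maps. Smoothness of \<open>k\<close> is bootstrapped from the two ODEs.

  This needs \<open>\<nu>\<^sub>t \<in> C\<close> for all \<open>t\<close>, which is shown by a clopen argument in time. Near a time
  with \<open>\<nu>\<^sub>t\<^sub>1 \<in> C\<close>, compare \<open>\<nu>\<close> with the linear flow \<open>\<xi>' = -\<pi>(A\<^sub>t) \<xi>\<close>, \<open>\<xi>\<^sub>t\<^sub>1 = \<nu>\<^sub>t\<^sub>1\<close>, whose
  generator \<open>A\<^sub>t\<close> is the \<open>J\<close>-linear part of \<open>P\<^sub>\<nu>\<^sub>t - S\<^sub>\<nu>\<^sub>t\<close>. Then \<open>\<xi>\<close> is a curve \<open>h \<cdot> \<nu>\<^sub>t\<^sub>1\<close> with
  \<open>h\<close> commuting with \<open>J\<close>, hence stays in \<open>C\<close>; as \<open>P\<^sub>\<xi> - S\<^sub>\<xi>\<close> already commutes with \<open>J\<close>, the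
  difference \<open>\<nu> - \<xi>\<close> satisfies a Gronwall inequality and vanishes.\<close>

section \<open>Uniqueness for ODEs\<close>

lemma has_vector_derivative_imp_continuous_on:
  assumes "\<forall>t\<in>I. (f has_vector_derivative f' t) (at t within I)"
  shows "continuous_on I f"
  unfolding continuous_on_eq_continuous_within using assms has_vector_derivative_continuous by blast

lemma is_interval_Icc_subset:
  fixes I :: "real set"
  assumes "is_interval I" "a \<in> I" "b \<in> I"
  shows "{a..b} \<subseteq> I"
  using assms unfolding is_interval_1 by (meson atLeastAtMost_iff subsetI)

lemma is_interval_restrict_ball:
  fixes I :: "real set"
  assumes "is_interval I" shows "is_interval {s\<in>I. dist s t < \<delta>}"
  using assms unfolding is_interval_1 by (auto simp: dist_real_def)

lemma continuous_on_norm_locally_bounded: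
  fixes M :: "real \<Rightarrow> 'b::real_normed_vector"
  assumes "continuous_on I M" "t \<in> I"
  shows "\<exists>\<delta>>0. \<forall>s\<in>I. dist s t < \<delta> \<longrightarrow> norm (M s) \<le> norm (M t) + 1"
proof -
  obtain \<delta> where "\<delta> > 0" and \<delta>: "\<forall>s\<in>I. dist s t < \<delta> \<longrightarrow> dist (M s) (M t) < 1"
    using assms unfolding continuous_on_iff by (meson zero_less_one)
  moreover have "norm (M s) \<le> norm (M t) + 1" if "dist (M s) (M t) < 1" for s
    using that norm_triangle_sub[of "M s" "M t"] by (simp add: dist_norm)
  ultimately show ?thesis by blast
qed

lemma continuous_on_norm_bounded_compact:
  fixes M :: "'a::metric_space \<Rightarrow> 'b::real_normed_vector"
  assumes "continuous_on S M" "compact S"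
  shows "\<exists>B\<ge>0. \<forall>s\<in>S. norm (M s) \<le> B"
proof -
  have "bounded (M ` S)" using compact_imp_bounded[OF compact_continuous_image[OF assms]] .
  then obtain B where "B > 0" "\<forall>x\<in>M ` S. norm x \<le> B" unfolding bounded_pos by blast
  then show ?thesis by (intro exI[of _ B]) auto
qed

lemma norm_le_of_mem_cball: "x \<in> cball c r \<Longrightarrow> norm x \<le> norm c + \<bar>r\<bar>"
  using norm_triangle_sub[of x c] by (auto simp: dist_norm norm_minus_commute)

lemma lipschitz_on_cball_norm_bound:
  fixes f :: "'a::real_normed_vector \<Rightarrow> 'b::real_normed_vector"
  assumes f: "L-lipschitz_on (cball c r) f" and x: "x \<in> cball c r"
  shows "norm (f x) \<le> norm (f c) + L * r"
proof -
  have "c \<in> cball c r" using x by (simp add: order_trans[OF zero_le_dist])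
  then have "norm (f x - f c) \<le> L * dist x c" using lipschitz_onD[OF f x] by (simp add: dist_norm)
  also have "\<dots> \<le> L * r" using x lipschitz_on_nonneg[OF f] by (intro mult_left_mono) (auto simp: dist_commute)
  finally show ?thesis using norm_triangle_sub[of "f x" "f c"] by simp
qed

text \<open>The weighted square \<open>exp (-2L(s - t\<^sub>0)) \<parallel>z s\<parallel>\<^sup>2\<close> is nonincreasing and vanishes at
  \<open>t\<^sub>0\<close>; the mirrored weight handles times before \<open>t\<^sub>0\<close>.\<close>

lemma gronwall_vanishing_right:
  fixes z :: "real \<Rightarrow> 'a::real_inner"
  assumes "t0 \<le> t" and sub: "{t0..t} \<subseteq> I" and z0: "z t0 = 0"
    and der: "\<forall>s\<in>I. (z has_vector_derivative z' s) (at s within I)"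
    and bnd: "\<forall>s\<in>I. norm (z' s) \<le> L * norm (z s)"
  shows "z t = 0"
proof -
  define g where "g s = exp (-2*L*(s - t0)) * (z s \<bullet> z s)" for s
  define g' where "g' s = exp (-2*L*(s - t0)) * (2 * (z s \<bullet> z' s)) + (-2*L) * exp (-2*L*(s - t0)) * (z s \<bullet> z s)" for s
  have d: "(g has_derivative (\<lambda>h. g' s * h)) (at s within {t0..t})" if "s \<in> {t0..t}" for s
  proof -
    have zd: "(z has_vector_derivative z' s) (at s within {t0..t})"
      using der sub that has_vector_derivative_within_subset by blast
    have "((\<lambda>s. z s \<bullet> z s) has_vector_derivative (z s \<bullet> z' s + z' s \<bullet> z s)) (at s within {t0..t})"
      using bounded_bilinear.has_vector_derivative[OF bounded_bilinear_inner zd zd] .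
    then have i: "((\<lambda>s. z s \<bullet> z s) has_real_derivative 2 * (z s \<bullet> z' s)) (at s within {t0..t})"
      by (simp add: has_real_derivative_iff_has_vector_derivative inner_commute)
    have e: "((\<lambda>s. exp (-2*L*(s - t0))) has_real_derivative (-2*L) * exp (-2*L*(s - t0))) (at s within {t0..t})"
      by (auto intro!: derivative_eq_intros)
    have "(g has_real_derivative g' s) (at s within {t0..t})"
      unfolding g_def g'_def using DERIV_mult[OF e i] by (simp add: algebra_simps)
    then show ?thesis by (simp add: has_field_derivative_def)
  qed
  obtain x where x: "x \<in> {t0..t}" "g t - g t0 = g' x * (t - t0)"
    using mvt_very_simple[OF assms(1), of g "\<lambda>s h. g' s * h"] d by auto
  have "z x \<bullet> z' x \<le> L * (z x \<bullet> z x)"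
  proof -
    have "z x \<bullet> z' x \<le> norm (z x) * norm (z' x)" by (rule norm_cauchy_schwarz)
    also have "\<dots> \<le> norm (z x) * (L * norm (z x))"
      using bnd sub x(1) by (intro mult_left_mono) auto
    finally show ?thesis by (simp add: power2_norm_eq_inner[symmetric] power2_eq_square algebra_simps)
  qed
  moreover have "g' x = (2 * exp (-2*L*(x - t0))) * (z x \<bullet> z' x - L * (z x \<bullet> z x))"
    by (simp add: g'_def algebra_simps)
  ultimately have "g' x \<le> 0" by (simp add: mult_nonneg_nonpos)
  moreover have "g t = g' x * (t - t0)" using x z0 by (simp add: g_def)
  ultimately have "g t \<le> 0" using assms(1) by (simp add: mult_nonpos_nonneg)
  then have "z t \<bullet> z t \<le> 0" unfolding g_def by (simp add: mult_le_0_iff)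
  then show ?thesis by (metis inner_ge_zero inner_eq_zero_iff order_antisym)
qed

lemma gronwall_vanishing_left:
  fixes z :: "real \<Rightarrow> 'a::real_inner"
  assumes "t \<le> t0" and sub: "{t..t0} \<subseteq> I" and z0: "z t0 = 0"
    and der: "\<forall>s\<in>I. (z has_vector_derivative z' s) (at s within I)"
    and bnd: "\<forall>s\<in>I. norm (z' s) \<le> L * norm (z s)"
  shows "z t = 0"
proof -
  define g where "g s = exp (2*L*(s - t0)) * (z s \<bullet> z s)" for s
  define g' where "g' s = exp (2*L*(s - t0)) * (2 * (z s \<bullet> z' s)) + (2*L) * exp (2*L*(s - t0)) * (z s \<bullet> z s)" for s
  have d: "(g has_derivative (\<lambda>h. g' s * h)) (at s within {t..t0})" if "s \<in> {t..t0}" for s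
  proof -
    have zd: "(z has_vector_derivative z' s) (at s within {t..t0})"
      using der sub that has_vector_derivative_within_subset by blast
    have "((\<lambda>s. z s \<bullet> z s) has_vector_derivative (z s \<bullet> z' s + z' s \<bullet> z s)) (at s within {t..t0})"
      using bounded_bilinear.has_vector_derivative[OF bounded_bilinear_inner zd zd] .
    then have i: "((\<lambda>s. z s \<bullet> z s) has_real_derivative 2 * (z s \<bullet> z' s)) (at s within {t..t0})"
      by (simp add: has_real_derivative_iff_has_vector_derivative inner_commute)
    have e: "((\<lambda>s. exp (2*L*(s - t0))) has_real_derivative (2*L) * exp (2*L*(s - t0))) (at s within {t..t0})"
      by (auto intro!: derivative_eq_intros)
    have "(g has_real_derivative g' s) (at s within {t..t0})"
      unfolding g_def g'_def using DERIV_mult[OF e i] by (simp add: algebra_simps)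
    then show ?thesis by (simp add: has_field_derivative_def)
  qed
  obtain x where x: "x \<in> {t..t0}" "g t0 - g t = g' x * (t0 - t)"
    using mvt_very_simple[OF assms(1), of g "\<lambda>s h. g' s * h"] d by auto
  have "- (z x \<bullet> z' x) \<le> L * (z x \<bullet> z x)"
  proof -
    have "- (z x \<bullet> z' x) \<le> norm (z x) * norm (z' x)"
      using norm_cauchy_schwarz[of "z x" "- z' x"] by simp
    also have "\<dots> \<le> norm (z x) * (L * norm (z x))"
      using bnd sub x(1) by (intro mult_left_mono) auto
    finally show ?thesis by (simp add: power2_norm_eq_inner[symmetric] power2_eq_square algebra_simps)
  qed
  moreover have "g' x = (2 * exp (2*L*(x - t0))) * (z x \<bullet> z' x + L * (z x \<bullet> z x))"
    by (simp add: g'_def algebra_simps)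
  ultimately have "g' x \<ge> 0" by simp
  moreover have "g t = - (g' x * (t0 - t))" using x z0 by (simp add: g_def)
  ultimately have "g t \<le> 0" using assms(1) by simp
  then have "z t \<bullet> z t \<le> 0" unfolding g_def by (simp add: mult_le_0_iff)
  then show ?thesis by (metis inner_ge_zero inner_eq_zero_iff order_antisym)
qed

text \<open>The zero set of \<open>z\<close> is closed, and open in \<open>I\<close> by the two lemmas above; \<open>I\<close> is connected.\<close>

lemma gronwall_vanishing:
  fixes z :: "real \<Rightarrow> 'a::real_inner"
  assumes I: "is_interval I" and t0: "t0 \<in> I" and z0: "z t0 = 0"
    and der: "\<forall>s\<in>I. (z has_vector_derivative z' s) (at s within I)"
    and bnd: "\<forall>t\<in>I. \<exists>\<delta>>0. \<exists>L. \<forall>s\<in>I. dist s t < \<delta> \<longrightarrow> norm (z' s) \<le> L * norm (z s)"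
  shows "\<forall>t\<in>I. z t = 0"
proof -
  define Z where "Z = {t\<in>I. z t = 0}"
  have cl: "closedin (top_of_set I) Z"
    unfolding Z_def
    by (rule continuous_closedin_preimage_constant[OF has_vector_derivative_imp_continuous_on[OF der]])
  have op: "openin (top_of_set I) Z"
    unfolding openin_euclidean_subtopology_iff
  proof (intro conjI ballI)
    show "Z \<subseteq> I" by (auto simp: Z_def)
    fix t assume "t \<in> Z"
    then have tI: "t \<in> I" and zt: "z t = 0" by (auto simp: Z_def)
    obtain \<delta> L where "\<delta> > 0" and L: "\<forall>s\<in>I. dist s t < \<delta> \<longrightarrow> norm (z' s) \<le> L * norm (z s)"
      using bnd tI by blast
    define N where "N = {r\<in>I. dist r t < \<delta>}"
    have derN: "\<forall>s\<in>N. (z has_vector_derivative z' s) (at s within N)"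
      using der has_vector_derivative_within_subset[of z _ _ I N] unfolding N_def by auto
    have bN: "\<forall>s\<in>N. norm (z' s) \<le> L * norm (z s)" using L unfolding N_def by simp
    have "z s = 0" if sI: "s \<in> I" and ds: "dist s t < \<delta>" for s
    proof (cases "t \<le> s")
      case True
      have "{t..s} \<subseteq> N" using is_interval_Icc_subset[OF I tI sI] ds
        by (auto simp: N_def dist_real_def)
      then show ?thesis using gronwall_vanishing_right[OF True _ zt derN bN] by blast
    next
      case False
      have "{s..t} \<subseteq> N" using is_interval_Icc_subset[OF I sI tI] ds False
        by (auto simp: N_def dist_real_def)
      then show ?thesis using gronwall_vanishing_left[of s t, OF _ _ zt derN bN] False by auto
    qed
    then show "\<exists>e>0. \<forall>x'\<in>I. dist x' t < e \<longrightarrow> x' \<in> Z" using \<open>\<delta> > 0\<close> by (auto simp: Z_def)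
  qed
  have "Z = {} \<or> Z = I"
    using is_interval_connected[OF I] cl op unfolding connected_clopen by blast
  then show ?thesis using t0 z0 by (auto simp: Z_def)
qed

lemma ode_solutions_agree:
  fixes F :: "real \<Rightarrow> 'a::real_inner \<Rightarrow> 'a"
  assumes M: "is_interval M" and t0: "t0 \<in> M" and x0: "x t0 = y t0"
    and lip: "\<And>s u v. s \<in> M \<Longrightarrow> norm (F s u - F s v) \<le> L * norm (u - v)"
    and x: "\<forall>s\<in>M. (x has_vector_derivative F s (x s)) (at s within M)"
    and y: "\<forall>s\<in>M. (y has_vector_derivative F s (y s)) (at s within M)"
  shows "\<forall>t\<in>M. x t = y t"
proof -
  have "\<forall>t\<in>M. x t - y t = 0"
  proof (rule gronwall_vanishing[OF M t0])
    show "x t0 - y t0 = 0" using x0 by simp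
    show "\<forall>s\<in>M. ((\<lambda>s. x s - y s) has_vector_derivative F s (x s) - F s (y s)) (at s within M)"
      using x y by (blast intro: has_vector_derivative_diff)
    show "\<forall>t\<in>M. \<exists>\<delta>>0. \<exists>L. \<forall>s\<in>M. dist s t < \<delta> \<longrightarrow> norm (F s (x s) - F s (y s)) \<le> L * norm (x s - y s)"
      using lip by (intro ballI exI[of _ 1] exI[of _ L]) auto
  qed
  then show ?thesis by simp
qed

lemma bilinear_ode_vanishing:
  fixes prod :: "'a::real_normed_vector \<Rightarrow> 'b::real_inner \<Rightarrow> 'b"
  assumes bb: "bounded_bilinear prod" and I: "is_interval I" and t0: "t0 \<in> I"
    and Bc: "continuous_on I B" and z0: "z t0 = 0"
    and der: "\<forall>s\<in>I. (z has_vector_derivative prod (B s) (z s)) (at s within I)"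
  shows "\<forall>t\<in>I. z t = 0"
proof (rule gronwall_vanishing[OF I t0 z0 der], intro ballI)
  fix t assume "t \<in> I"
  obtain K where K: "\<And>a b. norm (prod a b) \<le> norm a * norm b * K" "K > 0"
    using bounded_bilinear.pos_bounded[OF bb] by blast
  obtain \<delta> where "\<delta> > 0" and \<delta>: "\<forall>s\<in>I. dist s t < \<delta> \<longrightarrow> norm (B s) \<le> norm (B t) + 1"
    using continuous_on_norm_locally_bounded[OF Bc \<open>t \<in> I\<close>] by blast
  have "norm (prod (B s) (z s)) \<le> ((norm (B t) + 1) * K) * norm (z s)"
    if "s \<in> I" "dist s t < \<delta>" for s
  proof -
    have "norm (prod (B s) (z s)) \<le> norm (B s) * norm (z s) * K" by (rule K(1))
    also have "\<dots> \<le> (norm (B t) + 1) * norm (z s) * K"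
      using \<delta> that K(2) by (intro mult_right_mono) auto
    finally show ?thesis by (simp add: mult_ac)
  qed
  then show "\<exists>\<delta>>0. \<exists>L. \<forall>s\<in>I. dist s t < \<delta> \<longrightarrow> norm (prod (B s) (z s)) \<le> L * norm (z s)"
    using \<open>\<delta> > 0\<close> by blast
qed

section \<open>Existence for ODEs by Picard iteration\<close>

lemma integral_exp_weight_right:
  fixes K c :: real
  assumes "t0 \<le> \<tau>" "K > 0"
  shows "integral {t0..\<tau>} (\<lambda>s. K * c * exp (2*K*(s - t0))) = c/2 * (exp (2*K*(\<tau> - t0)) - 1)"
proof -
  have "((\<lambda>s. K * c * exp (2*K*(s - t0))) has_integral
        (c/2 * exp (2*K*(\<tau> - t0)) - c/2 * exp (2*K*(t0 - t0)))) {t0..\<tau>}"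
  proof (rule fundamental_theorem_of_calculus[OF assms(1)])
    fix s assume "s \<in> {t0..\<tau>}"
    have "((\<lambda>s. c/2 * exp (2*K*(s - t0))) has_real_derivative (c/2 * (exp (2*K*(s - t0)) * (2*K)))) (at s within {t0..\<tau>})"
      by (auto intro!: derivative_eq_intros)
    then show "((\<lambda>s. c/2 * exp (2*K*(s - t0))) has_vector_derivative K * c * exp (2*K*(s - t0))) (at s within {t0..\<tau>})"
      by (simp add: has_real_derivative_iff_has_vector_derivative algebra_simps)
  qed
  then have "integral {t0..\<tau>} (\<lambda>s. K * c * exp (2*K*(s - t0))) = c/2 * exp (2*K*(\<tau> - t0)) - c/2 * exp (2*K*(t0 - t0))" by (rule integral_unique)
  then show ?thesis by (simp add: algebra_simps)
qed

lemma integral_exp_weight_left: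
  fixes K c :: real
  assumes "\<tau> \<le> t0" "K > 0"
  shows "integral {\<tau>..t0} (\<lambda>s. K * c * exp (2*K*(t0 - s))) = c/2 * (exp (2*K*(t0 - \<tau>)) - 1)"
proof -
  have "((\<lambda>s. K * c * exp (2*K*(t0 - s))) has_integral
        (- c/2 * exp (2*K*(t0 - t0)) - (- c/2 * exp (2*K*(t0 - \<tau>))))) {\<tau>..t0}"
  proof (rule fundamental_theorem_of_calculus[OF assms(1)])
    fix s assume "s \<in> {\<tau>..t0}"
    have "((\<lambda>s. - c/2 * exp (2*K*(t0 - s))) has_real_derivative (- c/2 * (exp (2*K*(t0 - s)) * (- (2*K))))) (at s within {\<tau>..t0})"
      by (auto intro!: derivative_eq_intros)
    then show "((\<lambda>s. - c/2 * exp (2*K*(t0 - s))) has_vector_derivative K * c * exp (2*K*(t0 - s))) (at s within {\<tau>..t0})"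
      by (simp add: has_real_derivative_iff_has_vector_derivative algebra_simps)
  qed
  then have "integral {\<tau>..t0} (\<lambda>s. K * c * exp (2*K*(t0 - s))) = - c/2 * exp (2*K*(t0 - t0)) - (- c/2 * exp (2*K*(t0 - \<tau>)))" by (rule integral_unique)
  then show ?thesis by (simp add: algebra_simps)
qed

lemma integral_diff_exp_weight_bound:
  fixes g :: "real \<Rightarrow> 'a::banach"
  assumes ab: "t0 \<in> {a..b}" "\<tau> \<in> {a..b}" and K: "K > 0"
    and g: "continuous_on {a..b} g"
    and gb: "\<And>s. s \<in> {a..b} \<Longrightarrow> norm (g s) \<le> K * d * exp (2*K*\<bar>s - t0\<bar>)"
  shows "norm (integral {a..\<tau>} g - integral {a..t0} g) \<le> d/2 * (exp (2*K*\<bar>\<tau> - t0\<bar>) - 1)"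
proof (cases "t0 \<le> \<tau>")
  case True
  have gi: "g integrable_on {a..\<tau>}"
    using g ab by (intro integrable_continuous_real) (auto intro: continuous_on_subset)
  have "integral {a..t0} g + integral {t0..\<tau>} g = integral {a..\<tau>} g"
    using True ab gi by (intro Henstock_Kurzweil_Integration.integral_combine) auto
  then have "integral {a..\<tau>} g - integral {a..t0} g = integral {t0..\<tau>} g" by (simp add: algebra_simps)
  also have "norm \<dots> \<le> integral {t0..\<tau>} (\<lambda>s. K * d * exp (2*K*(s - t0)))"
  proof (rule integral_norm_bound_integral)
    show "g integrable_on {t0..\<tau>}"
      using g ab by (intro integrable_continuous_real) (auto intro: continuous_on_subset)
    show "(\<lambda>s. K * d * exp (2*K*(s - t0))) integrable_on {t0..\<tau>}"
      by (intro integrable_continuous_real continuous_intros)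
    fix s assume "s \<in> {t0..\<tau>}"
    then show "norm (g s) \<le> K * d * exp (2*K*(s - t0))" using gb[of s] ab by auto
  qed
  also have "\<dots> = d/2 * (exp (2*K*\<bar>\<tau> - t0\<bar>) - 1)" using integral_exp_weight_right[OF True K] True by simp
  finally show ?thesis .
next
  case False
  have gi: "g integrable_on {a..t0}"
    using g ab by (intro integrable_continuous_real) (auto intro: continuous_on_subset)
  have "integral {a..\<tau>} g + integral {\<tau>..t0} g = integral {a..t0} g"
    using False ab gi by (intro Henstock_Kurzweil_Integration.integral_combine) auto
  then have "integral {a..\<tau>} g - integral {a..t0} g = - integral {\<tau>..t0} g" by (simp add: algebra_simps)
  then have "norm (integral {a..\<tau>} g - integral {a..t0} g) = norm (integral {\<tau>..t0} g)" by simp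
  also have "\<dots> \<le> integral {\<tau>..t0} (\<lambda>s. K * d * exp (2*K*(t0 - s)))"
  proof (rule integral_norm_bound_integral)
    show "g integrable_on {\<tau>..t0}"
      using g ab by (intro integrable_continuous_real) (auto intro: continuous_on_subset)
    show "(\<lambda>s. K * d * exp (2*K*(t0 - s))) integrable_on {\<tau>..t0}"
      by (intro integrable_continuous_real continuous_intros)
    fix s assume "s \<in> {\<tau>..t0}"
    then show "norm (g s) \<le> K * d * exp (2*K*(t0 - s))" using gb[of s] ab by auto
  qed
  also have "\<dots> = d/2 * (exp (2*K*\<bar>\<tau> - t0\<bar>) - 1)" using integral_exp_weight_left[of \<tau> t0 K d] False K by simp
  finally show ?thesis .
qed

text \<open>Picard's integral operator is a \<open>1/2\<close>-contraction for the weighted sup norm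
  \<open>sup\<^sub>s exp (-2K\<bar>s - t\<^sub>0\<bar>) \<parallel>y s\<parallel>\<close> (Bielecki's norm).\<close>

lemma picard_weighted_contraction:
  fixes F :: "real \<Rightarrow> 'a::euclidean_space \<Rightarrow> 'a"
  assumes ab: "t0 \<in> {a..b}" "\<tau> \<in> {a..b}" and K: "K > 0"
    and cy: "continuous_on {a..b} (\<lambda>s. F s (y s))" and cz: "continuous_on {a..b} (\<lambda>s. F s (z s))"
    and lip: "\<And>s x x'. s \<in> {a..b} \<Longrightarrow> norm (F s x - F s x') \<le> K * norm (x - x')"
    and yz: "\<And>s. s \<in> {a..b} \<Longrightarrow> norm (y s - z s) \<le> d * exp (2*K*\<bar>s - t0\<bar>)"
  defines "P \<equiv> \<lambda>g t. integral {a..t} g - integral {a..t0} g"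
  shows "exp (- (2*K*\<bar>\<tau> - t0\<bar>)) * norm (P (\<lambda>s. F s (y s)) \<tau> - P (\<lambda>s. F s (z s)) \<tau>) \<le> d/2"
proof -
  have "d \<ge> 0" using yz[OF ab(1)] order_trans[OF norm_ge_zero] by simp
  have bound: "norm (F s (y s) - F s (z s)) \<le> K * d * exp (2*K*\<bar>s - t0\<bar>)" if "s \<in> {a..b}" for s
    using order_trans[OF lip[OF that] mult_left_mono[OF yz[OF that]]] K by (simp add: mult_ac)
  have int: "(\<lambda>s. F s (y s)) integrable_on {a..x}" "(\<lambda>s. F s (z s)) integrable_on {a..x}"
    if "x \<in> {a..b}" for x
    using that by (auto intro!: integrable_continuous_real continuous_on_subset[OF cy] continuous_on_subset[OF cz])
  have "P (\<lambda>s. F s (y s)) \<tau> - P (\<lambda>s. F s (z s)) \<tau>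
      = integral {a..\<tau>} (\<lambda>s. F s (y s) - F s (z s)) - integral {a..t0} (\<lambda>s. F s (y s) - F s (z s))"
    unfolding P_def using int[OF ab(2)] int[OF ab(1)] by (simp add: integral_diff)
  also have "norm \<dots> \<le> d/2 * (exp (2*K*\<bar>\<tau> - t0\<bar>) - 1)"
    by (intro integral_diff_exp_weight_bound continuous_on_diff) (use ab K bound cy cz in auto)
  finally have "exp (- (2*K*\<bar>\<tau> - t0\<bar>)) * norm (P (\<lambda>s. F s (y s)) \<tau> - P (\<lambda>s. F s (z s)) \<tau>)
      \<le> exp (- (2*K*\<bar>\<tau> - t0\<bar>)) * (d/2 * (exp (2*K*\<bar>\<tau> - t0\<bar>) - 1))"
    by (intro mult_left_mono) auto
  also have "\<dots> = d/2 * (1 - exp (- (2*K*\<bar>\<tau> - t0\<bar>)))"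
    by (simp add: algebra_simps exp_minus field_simps)
  also have "\<dots> \<le> d/2" using \<open>d \<ge> 0\<close> by (intro mult_left_le) auto
  finally show ?thesis .
qed

lemma integral_equation_imp_ode:
  fixes F :: "real \<Rightarrow> 'a::euclidean_space \<Rightarrow> 'a"
  assumes ab: "t0 \<in> {a..b}" and c: "continuous_on {a..b} (\<lambda>s. F s (x s))"
    and eq: "\<And>t. t \<in> {a..b} \<Longrightarrow>
               x t = x0 + (integral {a..t} (\<lambda>s. F s (x s)) - integral {a..t0} (\<lambda>s. F s (x s)))"
  shows "x t0 = x0" "\<forall>t\<in>{a..b}. (x has_vector_derivative F t (x t)) (at t within {a..b})"
proof -
  show "x t0 = x0" using eq[OF ab] by simp
  show "\<forall>t\<in>{a..b}. (x has_vector_derivative F t (x t)) (at t within {a..b})"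
  proof
    fix t assume t: "t \<in> {a..b}"
    have "((\<lambda>t. x0 + (integral {a..t} (\<lambda>s. F s (x s)) - integral {a..t0} (\<lambda>s. F s (x s))))
            has_vector_derivative F t (x t)) (at t within {a..b})"
      using integral_has_vector_derivative[OF c t] by (auto intro!: derivative_eq_intros)
    then have "((\<lambda>t. x0 + (integral {a..t} (\<lambda>s. F s (x s)) - integral {a..t0} (\<lambda>s. F s (x s))))
            has_vector_derivative F t (x t)) (at t within {a..b})"
      by simp
    from has_vector_derivative_weaken[OF this t order_refl] eq
    show "(x has_vector_derivative F t (x t)) (at t within {a..b})" by simp
  qed
qed

text \<open>The Picard operator acts on bounded continuous functions on \<open>\<real>\<close>, extended constantly outside
  \<open>[a, b]\<close>, in the weighted representation \<open>u s = exp (-2K\<bar>s - t\<^sub>0\<bar>) x s\<close>.\<close>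

lemma ode_exists_Icc:
  fixes F :: "real \<Rightarrow> 'a::euclidean_space \<Rightarrow> 'a"
  assumes ab: "t0 \<in> {a..b}"
    and cont: "\<And>y. continuous_on {a..b} y \<Longrightarrow> continuous_on {a..b} (\<lambda>s. F s (y s))"
    and lip: "\<And>s x y. s \<in> {a..b} \<Longrightarrow> norm (F s x - F s y) \<le> L * norm (x - y)"
  shows "\<exists>x. x t0 = x0 \<and> (\<forall>t\<in>{a..b}. (x has_vector_derivative F t (x t)) (at t within {a..b}))"
proof -
  define K where "K = max L 0 + 1"
  have K: "K > 0" unfolding K_def by auto
  have lipK: "norm (F s x - F s y) \<le> K * norm (x - y)" if "s \<in> {a..b}" for s x y
  proof -
    have "L * norm (x - y) \<le> K * norm (x - y)" unfolding K_def by (intro mult_right_mono) auto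
    then show ?thesis using lip[OF that, of x y] by linarith
  qed
  define w where "w s = exp (- (2*K*\<bar>s - t0\<bar>))" for s
  define wi where "wi s = exp (2*K*\<bar>s - t0\<bar>)" for s
  have wwi: "w s * wi s = 1" for s unfolding w_def wi_def by (simp add: exp_minus field_simps)
  define h where "h u s = F s (wi s *\<^sub>R apply_bcontfun u s)" for u :: "real \<Rightarrow>\<^sub>C 'a" and s
  have hc: "continuous_on {a..b} (h u)" for u
    unfolding h_def wi_def by (intro cont continuous_intros continuous_on_subset[OF continuous_on_apply_bcontfun]) auto
  define P where "P g t = integral {a..t} g - integral {a..t0} g" for g :: "real \<Rightarrow> 'a" and t
  define f where "f u t = w t *\<^sub>R (x0 + P (h u) t)" for u t
  have "continuous_on {a..b} (f u)" for u
  proof -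
    have "continuous_on {a..b} (\<lambda>t. integral {a..t} (h u))"
      by (intro indefinite_integral_continuous_1 integrable_continuous_real hc)
    then show ?thesis unfolding f_def P_def w_def by (intro continuous_intros)
  qed
  then have "\<exists>g. \<forall>t. apply_bcontfun g t = f u (clamp a b t)" for u
    using continuous_on_cbox_bcontfunE[of a b "f u"] by (metis cbox_interval)
  then obtain T where Tapp: "\<And>u t. apply_bcontfun (T u) t = f u (clamp a b t)" by metis
  have cl: "clamp a b t \<in> {a..b}" for t using clamp_in_interval[of a b t] ab by (simp add: cbox_interval)
  have contr: "dist (T u) (T v) \<le> 1/2 * dist u v" for u v
  proof (rule dist_bound)
    fix t
    have "w (clamp a b t) * norm (P (h u) (clamp a b t) - P (h v) (clamp a b t)) \<le> dist u v / 2"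
      unfolding w_def h_def P_def
    proof (rule picard_weighted_contraction[OF ab cl K _ _ lipK])
      show "continuous_on {a..b} (\<lambda>s. F s (wi s *\<^sub>R apply_bcontfun u s))"
        "continuous_on {a..b} (\<lambda>s. F s (wi s *\<^sub>R apply_bcontfun v s))"
        using hc unfolding h_def by auto
      fix s
      have "norm (wi s *\<^sub>R apply_bcontfun u s - wi s *\<^sub>R apply_bcontfun v s)
          = wi s * dist (apply_bcontfun u s) (apply_bcontfun v s)"
        by (simp add: dist_norm wi_def scaleR_diff_right[symmetric])
      also have "\<dots> \<le> wi s * dist u v" by (intro mult_left_mono dist_bounded) (auto simp: wi_def)
      finally show "norm (wi s *\<^sub>R apply_bcontfun u s - wi s *\<^sub>R apply_bcontfun v s)
          \<le> dist u v * exp (2 * K * \<bar>s - t0\<bar>)" by (simp add: wi_def mult.commute)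
    qed
    then show "dist (apply_bcontfun (T u) t) (apply_bcontfun (T v) t) \<le> 1/2 * dist u v"
      unfolding Tapp f_def dist_norm by (simp add: scaleR_diff_right[symmetric] w_def)
  qed
  obtain u where u: "T u = u"
    using banach_fix_type[of "1/2" T] contr by auto
  define x where "x t = wi t *\<^sub>R apply_bcontfun u t" for t
  have hx: "h u = (\<lambda>s. F s (x s))" unfolding h_def x_def by simp
  have "x t = x0 + P (h u) t" if "t \<in> {a..b}" for t
    using Tapp[of u t] u that wwi[of t] unfolding x_def f_def
    by (simp add: cbox_interval mult.commute)
  then show ?thesis
    using integral_equation_imp_ode[OF ab, of F x x0] hc[of u] unfolding hx P_def by blast
qed

lemma is_interval_lower_nbhd:
  fixes I :: "real set"
  assumes I: "is_interval I" and t: "t \<in> I" and t0: "t0 \<in> I"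
  shows "\<exists>a\<in>I. a \<le> t0 \<and> a \<le> t \<and> (\<exists>\<delta>>0. \<forall>s\<in>I. dist s t < \<delta> \<longrightarrow> a \<le> s)"
proof (cases "\<exists>s\<in>I. s < t")
  case True
  then obtain s1 where s1: "s1 \<in> I" "s1 < t" by auto
  define a where "a = min s1 t0"
  have aI: "a \<in> I" using s1 t0 by (simp add: a_def min_def)
  show ?thesis
  proof (intro bexI[OF _ aI] conjI exI[of _ "t - a"] ballI impI)
    show "a \<le> t0" "a \<le> t" "0 < t - a" using s1 by (auto simp: a_def)
    fix s assume "s \<in> I" "dist s t < t - a"
    then show "a \<le> s" by (auto simp: dist_real_def)
  qed
next
  case False
  then have "t \<le> t0" using t0 by force
  show ?thesis
  proof (intro bexI[OF _ t] conjI exI[of _ 1] ballI impI)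
    show "t \<le> t0" by fact
    fix s assume "s \<in> I" then show "t \<le> s" using False by force
  qed auto
qed

lemma is_interval_upper_nbhd:
  fixes I :: "real set"
  assumes I: "is_interval I" and t: "t \<in> I" and t0: "t0 \<in> I"
  shows "\<exists>b\<in>I. t0 \<le> b \<and> t \<le> b \<and> (\<exists>\<delta>>0. \<forall>s\<in>I. dist s t < \<delta> \<longrightarrow> s \<le> b)"
proof (cases "\<exists>s\<in>I. t < s")
  case True
  then obtain s1 where s1: "s1 \<in> I" "t < s1" by auto
  define b where "b = max s1 t0"
  have bI: "b \<in> I" using s1 t0 by (simp add: b_def max_def)
  show ?thesis
  proof (intro bexI[OF _ bI] conjI exI[of _ "b - t"] ballI impI)
    show "t0 \<le> b" "t \<le> b" "0 < b - t" using s1 by (auto simp: b_def)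
    fix s assume "s \<in> I" "dist s t < b - t"
    then show "s \<le> b" by (auto simp: dist_real_def)
  qed
next
  case False
  then have "t0 \<le> t" using t0 by force
  show ?thesis
  proof (intro bexI[OF _ t] conjI exI[of _ 1] ballI impI)
    show "t0 \<le> t" by fact
    fix s assume "s \<in> I" then show "s \<le> t" using False by force
  qed auto
qed

lemma is_interval_Icc_nbhd:
  fixes I :: "real set"
  assumes I: "is_interval I" and t: "t \<in> I" and t0: "t0 \<in> I"
  shows "\<exists>a b \<delta>. a \<in> I \<and> b \<in> I \<and> a \<le> t0 \<and> t0 \<le> b \<and> t \<in> {a..b} \<and> \<delta> > 0 \<and>
            (\<forall>s\<in>I. dist s t < \<delta> \<longrightarrow> s \<in> {a..b})"
proof -
  obtain a d1 where a: "a \<in> I" "a \<le> t0" "a \<le> t" "d1 > 0" "\<forall>s\<in>I. dist s t < d1 \<longrightarrow> a \<le> s"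
    using is_interval_lower_nbhd[OF assms] by blast
  obtain b d2 where b: "b \<in> I" "t0 \<le> b" "t \<le> b" "d2 > 0" "\<forall>s\<in>I. dist s t < d2 \<longrightarrow> s \<le> b"
    using is_interval_upper_nbhd[OF assms] by blast
  show ?thesis
    by (rule exI[of _ a], rule exI[of _ b], rule exI[of _ "min d1 d2"]) (use a b in auto)
qed

text \<open>Solutions on compact subintervals containing \<open>t\<^sub>0\<close> agree where they overlap, and every
  point of \<open>I\<close> has a neighbourhood in \<open>I\<close> covered by one of them.\<close>

lemma ode_exists_interval:
  fixes F :: "real \<Rightarrow> 'a::euclidean_space \<Rightarrow> 'a"
  assumes I: "is_interval I" and t0: "t0 \<in> I"
    and cont: "\<And>a b y. {a..b} \<subseteq> I \<Longrightarrow> continuous_on {a..b} y \<Longrightarrow> continuous_on {a..b} (\<lambda>s. F s (y s))"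
    and lip: "\<And>a b. {a..b} \<subseteq> I \<Longrightarrow> \<exists>L. \<forall>s\<in>{a..b}. \<forall>x y. norm (F s x - F s y) \<le> L * norm (x - y)"
  shows "\<exists>x. x t0 = x0 \<and> (\<forall>t\<in>I. (x has_vector_derivative F t (x t)) (at t within I))"
proof -
  define G where "G a b \<longleftrightarrow> a \<in> I \<and> b \<in> I \<and> a \<le> t0 \<and> t0 \<le> b" for a b
  define solves where "solves a b x \<longleftrightarrow>
    x t0 = x0 \<and> (\<forall>t\<in>{a..b}. (x has_vector_derivative F t (x t)) (at t within {a..b}))" for a b x
  define sol where "sol a b = (SOME x. solves a b x)" for a b
  have sub: "G a b \<Longrightarrow> {a..b} \<subseteq> I" for a b
    unfolding G_def using I is_interval_Icc_subset by blast
  have sol: "solves a b (sol a b)" if gab: "G a b" for a b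
  proof -
    obtain L where "\<forall>s\<in>{a..b}. \<forall>x y. norm (F s x - F s y) \<le> L * norm (x - y)"
      using lip[OF sub[OF gab]] by blast
    then have "\<exists>x. solves a b x"
      unfolding solves_def
      by (intro ode_exists_Icc[where L=L]) (use gab cont[OF sub[OF gab]] in \<open>auto simp: G_def\<close>)
    then show ?thesis unfolding sol_def by (rule someI_ex)
  qed
  have agree: "sol a b t = sol a' b' t"
    if g: "G a b" "G a' b'" and t: "t \<in> {a..b}" "t \<in> {a'..b'}" for a b a' b' t
  proof -
    define M where "M = {max a a'..min b b'}"
    have M: "M \<subseteq> {a..b}" "M \<subseteq> {a'..b'}" unfolding M_def by auto
    obtain L where L: "\<forall>s\<in>{a..b}. \<forall>x y. norm (F s x - F s y) \<le> L * norm (x - y)"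
      using lip[OF sub[OF g(1)]] by blast
    have "\<forall>t\<in>M. sol a b t = sol a' b' t"
    proof (rule ode_solutions_agree[where F=F and L=L])
      show "is_interval M" "t0 \<in> M" unfolding M_def using g by (auto simp: G_def)
      show "sol a b t0 = sol a' b' t0" using sol[OF g(1)] sol[OF g(2)] by (simp add: solves_def)
      show "\<forall>s\<in>M. (sol a b has_vector_derivative F s (sol a b s)) (at s within M)"
        "\<forall>s\<in>M. (sol a' b' has_vector_derivative F s (sol a' b' s)) (at s within M)"
        using sol[OF g(1)] sol[OF g(2)] M unfolding solves_def
        by (auto intro: has_vector_derivative_within_subset)
    qed (use L M in auto)
    moreover have "t \<in> M" using t unfolding M_def by auto
    ultimately show ?thesis by simp
  qed
  have "\<forall>t\<in>I. \<exists>a b \<delta>. G a b \<and> t \<in> {a..b} \<and> \<delta> > 0 \<and> (\<forall>s\<in>I. dist s t < \<delta> \<longrightarrow> s \<in> {a..b})"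
    using is_interval_Icc_nbhd[OF I _ t0] unfolding G_def by blast
  then obtain a b \<delta> where ab: "\<And>t. t \<in> I \<Longrightarrow> G (a t) (b t)" "\<And>t. t \<in> I \<Longrightarrow> t \<in> {a t..b t}"
    and \<delta>: "\<And>t. t \<in> I \<Longrightarrow> \<delta> t > 0" "\<And>t. t \<in> I \<Longrightarrow> \<forall>s\<in>I. dist s t < \<delta> t \<longrightarrow> s \<in> {a t..b t}"
    by metis
  define x where "x t = sol (a t) (b t) t" for t
  show ?thesis
  proof (intro exI[of _ x] conjI ballI)
    show "x t0 = x0" unfolding x_def using sol[OF ab(1)[OF t0]] by (simp add: solves_def)
    fix t assume t: "t \<in> I"
    define N where "N = I \<inter> ball t (\<delta> t)"
    have N: "N \<subseteq> {a t..b t}" using \<delta>(2)[OF t] unfolding N_def by (auto simp: dist_commute)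
    have eq: "sol (a t) (b t) s = x s" if "s \<in> N" for s
      unfolding x_def using that N agree[OF ab(1)[OF t] ab(1) _ ab(2)] unfolding N_def by auto
    have tN: "t \<in> N" using t \<delta>(1)[OF t] unfolding N_def by auto
    have "(sol (a t) (b t) has_vector_derivative F t (sol (a t) (b t) t)) (at t within {a t..b t})"
      using sol[OF ab(1)[OF t]] ab(2)[OF t] unfolding solves_def by blast
    then have "(sol (a t) (b t) has_vector_derivative F t (x t)) (at t within {a t..b t})"
      by (simp only: eq[OF tN])
    then have "(x has_vector_derivative F t (x t)) (at t within N)"
      by (rule has_vector_derivative_weaken[OF _ tN N eq])
    moreover have "at t within N = at t within I"
      unfolding N_def by (rule at_within_nhd[where S="ball t (\<delta> t)"]) (use \<delta>(1)[OF t] in auto)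
    ultimately show "(x has_vector_derivative F t (x t)) (at t within I)" by simp
  qed
qed

lemma bilinear_ode_exists:
  fixes M :: "real \<Rightarrow> 'a::euclidean_space" and prod :: "'a \<Rightarrow> 'b::euclidean_space \<Rightarrow> 'b"
  assumes bb: "bounded_bilinear prod" and I: "is_interval I" and t0: "t0 \<in> I"
    and Mc: "continuous_on I M"
  shows "\<exists>x. x t0 = x0 \<and> (\<forall>t\<in>I. (x has_vector_derivative prod (M t) (x t)) (at t within I))"
proof (rule ode_exists_interval[OF I t0])
  fix a b :: real and y :: "real \<Rightarrow> 'b" assume ab: "{a..b} \<subseteq> I" and y: "continuous_on {a..b} y"
  show "continuous_on {a..b} (\<lambda>s. prod (M s) (y s))"
    using bounded_bilinear.continuous_on[OF bb continuous_on_subset[OF Mc ab] y] .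
next
  fix a b :: real assume ab: "{a..b} \<subseteq> I"
  obtain Bm where Bm: "Bm \<ge> 0" "\<forall>s\<in>{a..b}. norm (M s) \<le> Bm"
    using continuous_on_norm_bounded_compact[OF continuous_on_subset[OF Mc ab] compact_Icc] by blast
  obtain K where K: "K > 0" "\<forall>a b. norm (prod a b) \<le> norm a * norm b * K"
    using bounded_bilinear.pos_bounded[OF bb] by blast
  have "norm (prod (M s) x - prod (M s) y) \<le> Bm * K * norm (x - y)" if s: "s \<in> {a..b}" for s x y
  proof -
    have "norm (prod (M s) x - prod (M s) y) = norm (prod (M s) (x - y))"
      by (simp add: bounded_bilinear.diff_right[OF bb])
    also have "\<dots> \<le> norm (M s) * norm (x - y) * K" using K by blast
    also have "\<dots> \<le> Bm * norm (x - y) * K"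
      using Bm s K by (intro mult_right_mono) auto
    finally show ?thesis by (simp add: mult_ac)
  qed
  then show "\<exists>L. \<forall>s\<in>{a..b}. \<forall>x y. norm (prod (M s) x - prod (M s) y) \<le> L * norm (x - y)"
    by blast
qed

section \<open>Smooth maps and curves\<close>

lemma segment_derivative_bound:
  fixes g :: "real \<Rightarrow> 'b::real_normed_vector"
  assumes d: "\<And>s. s \<in> closed_segment 0 c \<Longrightarrow> (g has_vector_derivative g' s) (at s)"
    and B: "\<And>s. s \<in> closed_segment 0 c \<Longrightarrow> norm (g' s) \<le> B"
  shows "norm (g c - g 0) \<le> B * \<bar>c\<bar>"
proof -
  have "norm (g c - g 0) \<le> B * norm (c - 0)"
  proof (rule differentiable_bound[of "closed_segment 0 c" g "\<lambda>s h. h *\<^sub>R g' s"])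
    show "convex (closed_segment 0 c)" by simp
    fix s assume s: "s \<in> closed_segment 0 c"
    show "(g has_derivative (\<lambda>h. h *\<^sub>R g' s)) (at s within closed_segment 0 c)"
      using d[OF s] unfolding has_vector_derivative_def by (rule has_derivative_at_withinI)
    show "onorm (\<lambda>h. h *\<^sub>R g' s) \<le> B"
    proof (rule onorm_le)
      fix h :: real
      show "norm (h *\<^sub>R g' s) \<le> B * norm h"
        using B[OF s] by (simp add: mult.commute[of B]) (metis abs_ge_zero mult_left_mono)
    qed
  qed auto
  then show ?thesis by simp
qed

lemma line_increment_bound:
  fixes f :: "'a::real_normed_vector \<Rightarrow> 'b::real_normed_vector"
  assumes dd: "\<And>s. s \<in> closed_segment 0 c \<Longrightarrow>
                 ((\<lambda>t. f ((p + s *\<^sub>R b) + t *\<^sub>R b)) has_vector_derivative Df (p + s *\<^sub>R b)) (at 0)"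
    and close: "\<And>s. s \<in> closed_segment 0 c \<Longrightarrow> norm (Df (p + s *\<^sub>R b) - D) \<le> e"
  shows "norm (f (p + c *\<^sub>R b) - f p - c *\<^sub>R D) \<le> e * \<bar>c\<bar>"
proof -
  define g where "g s = f (p + s *\<^sub>R b) - s *\<^sub>R D" for s
  have "(g has_vector_derivative (Df (p + s *\<^sub>R b) - D)) (at s)"
    if "s \<in> closed_segment 0 c" for s
  proof -
    have "((\<lambda>t. f ((p + s *\<^sub>R b) + t *\<^sub>R b)) has_vector_derivative Df (p + s *\<^sub>R b)) (at (s - s))"
      using dd[OF that] by simp
    then have "(((\<lambda>t. f ((p + s *\<^sub>R b) + t *\<^sub>R b)) \<circ> (\<lambda>r. r - s)) has_vector_derivative
                  1 *\<^sub>R Df (p + s *\<^sub>R b)) (at s)"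
      by (intro vector_diff_chain_at) (auto intro!: derivative_eq_intros)
    moreover have "((\<lambda>t. f ((p + s *\<^sub>R b) + t *\<^sub>R b)) \<circ> (\<lambda>r. r - s)) = (\<lambda>r. f (p + r *\<^sub>R b))"
      by (auto simp: fun_eq_iff algebra_simps)
    ultimately have "((\<lambda>r. f (p + r *\<^sub>R b)) has_vector_derivative Df (p + s *\<^sub>R b)) (at s)" by simp
    then show ?thesis unfolding g_def by (intro derivative_eq_intros) auto
  qed
  then have "norm (g c - g 0) \<le> e * \<bar>c\<bar>" by (rule segment_derivative_bound) (use close in auto)
  then show ?thesis by (simp add: g_def algebra_simps)
qed

text \<open>The increment of \<open>f\<close> is telescoped along the coordinate directions in \<open>B\<close>.\<close>

lemma coordinate_increments_bound:
  fixes f :: "'a::euclidean_space \<Rightarrow> 'b::real_normed_vector"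
  assumes near: "\<And>y. dist y x < d \<Longrightarrow> y \<in> U \<and> (\<forall>b\<in>Basis. dist (Df b y) (Df b x) < e)"
    and dd: "\<And>b y. b \<in> Basis \<Longrightarrow> y \<in> U \<Longrightarrow> ((\<lambda>t. f (y + t *\<^sub>R b)) has_vector_derivative Df b y) (at 0)"
    and small: "(\<Sum>b\<in>Basis. \<bar>v \<bullet> b\<bar>) < d" and B: "B \<subseteq> Basis"
  shows "norm (f (x + (\<Sum>b\<in>B. (v \<bullet> b) *\<^sub>R b)) - f x - (\<Sum>b\<in>B. (v \<bullet> b) *\<^sub>R Df b x))
           \<le> e * (\<Sum>b\<in>B. \<bar>v \<bullet> b\<bar>)"
  using finite_subset[OF B finite_Basis] B
proof (induction B rule: finite_induct)
  case empty
  then show ?case by simp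
next
  case (insert b B)
  have bB: "b \<in> Basis" "B \<subseteq> Basis" using insert by auto
  define p where "p = x + (\<Sum>b\<in>B. (v \<bullet> b) *\<^sub>R b)"
  define c where "c = v \<bullet> b"
  have pn: "norm (p - x) \<le> (\<Sum>b\<in>B. \<bar>v \<bullet> b\<bar>)"
  proof -
    have "norm (p - x) \<le> (\<Sum>b\<in>B. norm ((v \<bullet> b) *\<^sub>R b))" unfolding p_def by (simp only: add_diff_cancel_left' norm_sum)
    also have "\<dots> = (\<Sum>b\<in>B. \<bar>v \<bullet> b\<bar>)" using bB by (intro sum.cong) auto
    finally show ?thesis .
  qed
  have "(\<Sum>b\<in>B. \<bar>v \<bullet> b\<bar>) + \<bar>c\<bar> = (\<Sum>b\<in>insert b B. \<bar>v \<bullet> b\<bar>)"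
    using insert by (simp add: c_def)
  also have "\<dots> \<le> (\<Sum>b\<in>Basis. \<bar>v \<bullet> b\<bar>)"
    using insert by (intro sum_mono2) auto
  finally have Bsub: "(\<Sum>b\<in>B. \<bar>v \<bullet> b\<bar>) + \<bar>c\<bar> < d" using small by simp
  have seg: "dist (p + s *\<^sub>R b) x < d" if "s \<in> closed_segment 0 c" for s
  proof -
    have "\<bar>s\<bar> \<le> \<bar>c\<bar>" using that by (auto simp: closed_segment_eq_real_ivl split: if_splits)
    have "dist (p + s *\<^sub>R b) x \<le> norm (p - x) + \<bar>s\<bar>"
      using bB norm_triangle_ineq[of "p - x" "s *\<^sub>R b"] by (simp add: dist_norm algebra_simps)
    then show ?thesis using pn \<open>\<bar>s\<bar> \<le> \<bar>c\<bar>\<close> Bsub by simp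
  qed
  have step: "norm (f (p + c *\<^sub>R b) - f p - c *\<^sub>R Df b x) \<le> e * \<bar>c\<bar>"
  proof (rule line_increment_bound[where Df="Df b"])
    fix s assume "s \<in> closed_segment 0 c"
    then show "((\<lambda>t. f (p + s *\<^sub>R b + t *\<^sub>R b)) has_vector_derivative Df b (p + s *\<^sub>R b)) (at 0)"
      and "norm (Df b (p + s *\<^sub>R b) - Df b x) \<le> e"
      using near[OF seg] dd bB by (auto simp: dist_norm less_imp_le)
  qed
  have "x + (\<Sum>b\<in>insert b B. (v \<bullet> b) *\<^sub>R b) = p + c *\<^sub>R b"
    using insert by (simp add: p_def c_def algebra_simps)
  moreover have "(\<Sum>b\<in>insert b B. (v \<bullet> b) *\<^sub>R Df b x) = c *\<^sub>R Df b x + (\<Sum>b\<in>B. (v \<bullet> b) *\<^sub>R Df b x)"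
    using insert by (simp add: c_def)
  ultimately have "f (x + (\<Sum>b\<in>insert b B. (v \<bullet> b) *\<^sub>R b)) - f x - (\<Sum>b\<in>insert b B. (v \<bullet> b) *\<^sub>R Df b x)
      = (f (p + c *\<^sub>R b) - f p - c *\<^sub>R Df b x) + (f p - f x - (\<Sum>b\<in>B. (v \<bullet> b) *\<^sub>R Df b x))"
    by (simp add: algebra_simps)
  then have "norm (f (x + (\<Sum>b\<in>insert b B. (v \<bullet> b) *\<^sub>R b)) - f x - (\<Sum>b\<in>insert b B. (v \<bullet> b) *\<^sub>R Df b x))
      \<le> norm (f (p + c *\<^sub>R b) - f p - c *\<^sub>R Df b x) + norm (f p - f x - (\<Sum>b\<in>B. (v \<bullet> b) *\<^sub>R Df b x))"
    by (simp only: norm_triangle_ineq)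
  also have "\<dots> \<le> e * \<bar>c\<bar> + e * (\<Sum>b\<in>B. \<bar>v \<bullet> b\<bar>)"
    using step insert(3)[OF bB(2)] unfolding p_def by simp
  also have "\<dots> = e * (\<Sum>b\<in>insert b B. \<bar>v \<bullet> b\<bar>)"
    using insert by (simp add: c_def algebra_simps)
  finally show ?case .
qed

lemma has_derivative_continuous_partials:
  fixes f :: "'a::euclidean_space \<Rightarrow> 'b::real_normed_vector"
  assumes U: "open U" "x \<in> U"
    and dc: "\<And>b. b \<in> Basis \<Longrightarrow> continuous_on U (Df b)"
    and dd: "\<And>b y. b \<in> Basis \<Longrightarrow> y \<in> U \<Longrightarrow> ((\<lambda>t. f (y + t *\<^sub>R b)) has_vector_derivative Df b y) (at 0)"
  shows "(f has_derivative (\<lambda>v. \<Sum>b\<in>Basis. (v \<bullet> b) *\<^sub>R Df b x)) (at x)"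
  unfolding has_derivative_at_alt
proof (intro conjI allI impI)
  show "bounded_linear (\<lambda>v. \<Sum>b\<in>Basis. (v \<bullet> b) *\<^sub>R Df b x)"
    by (intro bounded_linear_intros)
  fix e :: real assume e: "e > 0"
  define n where "n = real DIM('a)"
  have n: "n > 0" unfolding n_def by simp
  define e' where "e' = e / n"
  have e': "e' > 0" unfolding e'_def using e n by simp
  have "\<forall>\<^sub>F y in at x. y \<in> U \<and> (\<forall>b\<in>Basis. dist (Df b y) (Df b x) < e')"
  proof (intro eventually_conj eventually_ball_finite ballI)
    show "\<forall>\<^sub>F y in at x. y \<in> U" using U by (rule eventually_at_in_open')
    show "finite (Basis::'a set)" by simp
    fix b :: 'a assume b: "b \<in> Basis"
    have "isCont (Df b) x" using dc[OF b] U continuous_on_eq_continuous_at by blast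
    then show "\<forall>\<^sub>F y in at x. dist (Df b y) (Df b x) < e'"
      using e' unfolding isCont_def by (rule tendstoD)
  qed
  then obtain d where d: "d > 0"
    and dP: "\<And>y. y \<noteq> x \<Longrightarrow> dist y x < d \<Longrightarrow> y \<in> U \<and> (\<forall>b\<in>Basis. dist (Df b y) (Df b x) < e')"
    unfolding eventually_at by auto
  have near: "y \<in> U \<and> (\<forall>b\<in>Basis. dist (Df b y) (Df b x) < e')" if "dist y x < d" for y
    using dP[OF _ that] U e' by (cases "y = x") auto
  show "\<exists>d>0. \<forall>y. norm (y - x) < d \<longrightarrow>
          norm (f y - f x - (\<Sum>b\<in>Basis. ((y - x) \<bullet> b) *\<^sub>R Df b x)) \<le> e * norm (y - x)"
  proof (intro exI[of _ "d / n"] conjI allI impI)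
    show "d / n > 0" using d n by simp
    fix y assume y: "norm (y - x) < d / n"
    define v where "v = y - x"
    have "(\<Sum>b\<in>Basis. \<bar>v \<bullet> b\<bar>) \<le> (\<Sum>b\<in>(Basis::'a set). norm v)"
      by (intro sum_mono Basis_le_norm)
    then have l1: "(\<Sum>b\<in>Basis. \<bar>v \<bullet> b\<bar>) \<le> n * norm v" by (simp add: n_def)
    have "(\<Sum>b\<in>Basis. \<bar>v \<bullet> b\<bar>) < d"
      using l1 y n unfolding v_def by (simp add: pos_less_divide_eq mult.commute order_le_less_trans)
    from coordinate_increments_bound[OF near dd this order_refl]
    have "norm (f y - f x - (\<Sum>b\<in>Basis. ((y - x) \<bullet> b) *\<^sub>R Df b x)) \<le> e' * (\<Sum>b\<in>Basis. \<bar>v \<bullet> b\<bar>)"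
      unfolding v_def by (simp add: euclidean_representation)
    also have "\<dots> \<le> e' * (n * norm v)" using l1 e' by (intro mult_left_mono) auto
    also have "\<dots> = e * norm (y - x)" unfolding e'_def v_def using n by simp
    finally show "norm (f y - f x - (\<Sum>b\<in>Basis. ((y - x) \<bullet> b) *\<^sub>R Df b x)) \<le> e * norm (y - x)" .
  qed
qed

definition Ck_curve :: "nat \<Rightarrow> real set \<Rightarrow> (real \<Rightarrow> 'b::real_normed_vector) \<Rightarrow> bool" where
  "Ck_curve m I c \<longleftrightarrow> (\<exists>D. D 0 = c \<and> (\<forall>j<m. \<forall>t\<in>I. (D j has_vector_derivative D (Suc j) t) (at t within I)))"

lemma Ck_curve_0: "Ck_curve 0 I c"
  unfolding Ck_curve_def by auto

lemma Ck_curve_Suc: "Ck_curve (Suc m) I c \<longleftrightarrow> (\<exists>c'. (\<forall>t\<in>I. (c has_vector_derivative c' t) (at t within I)) \<and> Ck_curve m I c')"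
proof
  assume "Ck_curve (Suc m) I c"
  then obtain D where D: "D 0 = c" "\<forall>j<Suc m. \<forall>t\<in>I. (D j has_vector_derivative D (Suc j) t) (at t within I)"
    unfolding Ck_curve_def by blast
  show "\<exists>c'. (\<forall>t\<in>I. (c has_vector_derivative c' t) (at t within I)) \<and> Ck_curve m I c'"
    by (rule exI[of _ "D 1"]) (use D in \<open>auto simp: Ck_curve_def intro!: exI[of _ "\<lambda>j. D (Suc j)"]\<close>)
next
  assume "\<exists>c'. (\<forall>t\<in>I. (c has_vector_derivative c' t) (at t within I)) \<and> Ck_curve m I c'"
  then obtain c' D where c': "\<forall>t\<in>I. (c has_vector_derivative c' t) (at t within I)"
    and D: "D 0 = c'" "\<forall>j<m. \<forall>t\<in>I. (D j has_vector_derivative D (Suc j) t) (at t within I)"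
    unfolding Ck_curve_def by blast
  define E where "E j = (case j of 0 \<Rightarrow> c | Suc i \<Rightarrow> D i)" for j
  have "\<forall>j<Suc m. \<forall>t\<in>I. (E j has_vector_derivative E (Suc j) t) (at t within I)"
  proof (intro allI impI ballI)
    fix j t assume "j < Suc m" "t \<in> I"
    then show "(E j has_vector_derivative E (Suc j) t) (at t within I)"
      using c' D by (cases j) (auto simp: E_def)
  qed
  then show "Ck_curve (Suc m) I c" unfolding Ck_curve_def by (intro exI[of _ E]) (auto simp: E_def)
qed

lemma Ck_curve_SucD: "Ck_curve (Suc m) I c \<Longrightarrow> Ck_curve m I c"
  unfolding Ck_curve_def by auto

lemma Ck_curve_const: "Ck_curve m I (\<lambda>t. k)"
proof (induction m)
  case 0 show ?case by (rule Ck_curve_0)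
next
  case (Suc m)
  have "Ck_curve m I (\<lambda>t. 0::'a)"
    unfolding Ck_curve_def by (intro exI[of _ "\<lambda>j t. 0"]) auto
  then show ?case unfolding Ck_curve_Suc by (intro exI[of _ "\<lambda>t. 0"]) auto
qed

lemma Ck_curve_add: "Ck_curve m I x \<Longrightarrow> Ck_curve m I y \<Longrightarrow> Ck_curve m I (\<lambda>t. x t + y t)"
  unfolding Ck_curve_def
proof (elim exE conjE)
  fix Dx Dy assume x: "Dx 0 = x" "\<forall>j<m. \<forall>t\<in>I. (Dx j has_vector_derivative Dx (Suc j) t) (at t within I)"
    and y: "Dy 0 = y" "\<forall>j<m. \<forall>t\<in>I. (Dy j has_vector_derivative Dy (Suc j) t) (at t within I)"
  show "\<exists>D. D 0 = (\<lambda>t. x t + y t) \<and> (\<forall>j<m. \<forall>t\<in>I. (D j has_vector_derivative D (Suc j) t) (at t within I))"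
    by (rule exI[of _ "\<lambda>j t. Dx j t + Dy j t"]) (use x y in \<open>auto intro!: has_vector_derivative_add\<close>)
qed

lemma Ck_curve_linear:
  assumes f: "bounded_linear f" shows "Ck_curve m I x \<Longrightarrow> Ck_curve m I (\<lambda>t. f (x t))"
  unfolding Ck_curve_def
proof (elim exE conjE)
  fix Dx assume x: "Dx 0 = x" "\<forall>j<m. \<forall>t\<in>I. (Dx j has_vector_derivative Dx (Suc j) t) (at t within I)"
  show "\<exists>D. D 0 = (\<lambda>t. f (x t)) \<and> (\<forall>j<m. \<forall>t\<in>I. (D j has_vector_derivative D (Suc j) t) (at t within I))"
    by (rule exI[of _ "\<lambda>j t. f (Dx j t)"]) (use x in \<open>auto intro!: bounded_linear.has_vector_derivative[OF f]\<close>)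
qed

lemma Ck_curve_bilinear:
  assumes pr: "bounded_bilinear pr"
  shows "Ck_curve m I x \<Longrightarrow> Ck_curve m I y \<Longrightarrow> Ck_curve m I (\<lambda>t. pr (x t) (y t))"
proof (induction m arbitrary: x y)
  case 0 show ?case by (rule Ck_curve_0)
next
  case (Suc m)
  obtain x' where x': "\<forall>t\<in>I. (x has_vector_derivative x' t) (at t within I)" "Ck_curve m I x'"
    using Suc.prems(1) unfolding Ck_curve_Suc by blast
  obtain y' where y': "\<forall>t\<in>I. (y has_vector_derivative y' t) (at t within I)" "Ck_curve m I y'"
    using Suc.prems(2) unfolding Ck_curve_Suc by blast
  have "Ck_curve m I (\<lambda>t. pr (x t) (y' t) + pr (x' t) (y t))"
    using Suc.IH[OF Ck_curve_SucD[OF Suc.prems(1)] y'(2)] Suc.IH[OF x'(2) Ck_curve_SucD[OF Suc.prems(2)]]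
    by (rule Ck_curve_add)
  moreover have "\<forall>t\<in>I. ((\<lambda>t. pr (x t) (y t)) has_vector_derivative pr (x t) (y' t) + pr (x' t) (y t)) (at t within I)"
    using x'(1) y'(1) bounded_bilinear.has_vector_derivative[OF pr] by blast
  ultimately show ?case unfolding Ck_curve_Suc
    by (intro exI[of _ "\<lambda>t. pr (x t) (y' t) + pr (x' t) (y t)"]) simp
qed

lemma Ck_curve_sum:
  assumes "finite A" shows "(\<And>i. i \<in> A \<Longrightarrow> Ck_curve m I (f i)) \<Longrightarrow> Ck_curve m I (\<lambda>t. \<Sum>i\<in>A. f i t)"
  using assms
proof (induction A rule: finite_induct)
  case empty then show ?case by (simp add: Ck_curve_const)
next
  case (insert a A)
  then show ?case by (simp add: Ck_curve_add)
qed

lemma Ck_curve_minus: "Ck_curve m I x \<Longrightarrow> Ck_curve m I (\<lambda>t. - x t)"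
  using Ck_curve_linear[OF bounded_linear_minus[OF bounded_linear_ident]] by blast

lemma Ck_curve_diff: "Ck_curve m I x \<Longrightarrow> Ck_curve m I y \<Longrightarrow> Ck_curve m I (\<lambda>t. x t - y t)"
  using Ck_curve_add[of m I x "\<lambda>t. - y t"] Ck_curve_minus[of m I y] by simp

lemma Ck_curve_continuous_on: "Ck_curve (Suc m) I c \<Longrightarrow> continuous_on I c"
  unfolding Ck_curve_Suc using has_vector_derivative_imp_continuous_on by blast

lemma bilinear_ode_Ck_curve:
  fixes prod :: "'a::real_normed_vector \<Rightarrow> 'b::real_normed_vector \<Rightarrow> 'b"
  assumes bb: "bounded_bilinear prod" and B: "\<And>m. Ck_curve m I B"
    and xd: "\<forall>t\<in>I. (x has_vector_derivative prod (B t) (x t)) (at t within I)"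
  shows "Ck_curve m I x"
proof (induction m)
  case 0 show ?case by (rule Ck_curve_0)
next
  case (Suc m)
  have "Ck_curve m I (\<lambda>t. prod (B t) (x t))" by (rule Ck_curve_bilinear[OF bb B Suc])
  then show ?case unfolding Ck_curve_Suc using xd by (intro exI[of _ "\<lambda>t. prod (B t) (x t)"]) blast
qed

definition smooth_derivs :: "'a::real_normed_vector set \<Rightarrow> ('a list \<Rightarrow> 'a \<Rightarrow> 'b::real_normed_vector) \<Rightarrow> bool" where
  "smooth_derivs U D \<longleftrightarrow> (\<forall>vs. continuous_on U (D vs)) \<and>
     (\<forall>vs v. \<forall>x\<in>U. ((\<lambda>t. D vs (x + t *\<^sub>R v)) has_vector_derivative D (v # vs) x) (at 0))"

lemma smooth_onE:
  assumes "smooth_on U f"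
  obtains D where "open U" "D [] = f" "smooth_derivs U D"
  using assms unfolding smooth_on_def smooth_derivs_def by blast

lemma smooth_derivs_shift: "smooth_derivs U D \<Longrightarrow> smooth_derivs U (\<lambda>vs. D (vs @ [b]))"
  unfolding smooth_derivs_def by auto

lemma smooth_derivs_has_vector_derivative:
  fixes D :: "'a::euclidean_space list \<Rightarrow> 'a \<Rightarrow> 'b::real_normed_vector"
  assumes U: "open U" and sf: "smooth_derivs U D"
    and xd: "(x has_vector_derivative x') (at t within I)" and xt: "x t \<in> U"
  shows "((\<lambda>t. D [] (x t)) has_vector_derivative (\<Sum>b\<in>Basis. (x' \<bullet> b) *\<^sub>R D [b] (x t))) (at t within I)"
proof -
  have fr: "(D [] has_derivative (\<lambda>v. \<Sum>b\<in>Basis. (v \<bullet> b) *\<^sub>R D [b] (x t))) (at (x t))"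
    by (rule has_derivative_continuous_partials[OF U xt]) (use sf in \<open>auto simp: smooth_derivs_def\<close>)
  have "((\<lambda>t. D [] (x t)) has_derivative (\<lambda>h. \<Sum>b\<in>Basis. ((h *\<^sub>R x') \<bullet> b) *\<^sub>R D [b] (x t))) (at t within I)"
    using has_derivative_compose[OF xd[unfolded has_vector_derivative_def] fr] .
  then show ?thesis unfolding has_vector_derivative_def
    by (simp add: scaleR_sum_right)
qed

lemma smooth_derivs_lipschitz_cball:
  fixes D :: "'a::euclidean_space list \<Rightarrow> 'a \<Rightarrow> 'b::real_normed_vector"
  assumes U: "open U" and sf: "smooth_derivs U D" and y0: "y0 \<in> U"
  shows "\<exists>r>0. \<exists>L. L-lipschitz_on (cball y0 r) (D [])"
proof -
  obtain r where r: "r > 0" "cball y0 r \<subseteq> U" using U y0 open_contains_cball by blast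
  have cc: "continuous_on (cball y0 r) (\<lambda>x. \<Sum>b\<in>Basis. norm (D [b] x))"
    using sf r(2) unfolding smooth_derivs_def by (intro continuous_intros) (auto intro: continuous_on_subset)
  obtain M where M: "M \<ge> 0" "\<forall>x\<in>cball y0 r. norm (\<Sum>b\<in>Basis. norm (D [b] x)) \<le> M"
    using continuous_on_norm_bounded_compact[OF cc compact_cball] by blast
  have der: "(D [] has_derivative (\<lambda>v. \<Sum>b\<in>Basis. (v \<bullet> b) *\<^sub>R D [b] x)) (at x within cball y0 r)"
    if "x \<in> cball y0 r" for x
  proof -
    have xU: "x \<in> U" using that r(2) by blast
    have "(D [] has_derivative (\<lambda>v. \<Sum>b\<in>Basis. (v \<bullet> b) *\<^sub>R D [b] x)) (at x)"
      by (rule has_derivative_continuous_partials[OF U xU]) (use sf in \<open>auto simp: smooth_derivs_def\<close>)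
    then show ?thesis by (rule has_derivative_at_withinI)
  qed
  have on: "onorm (\<lambda>v. \<Sum>b\<in>Basis. (v \<bullet> b) *\<^sub>R D [b] x) \<le> M" if "x \<in> cball y0 r" for x
  proof (rule onorm_le)
    fix v :: 'a
    have "norm (\<Sum>b\<in>Basis. (v \<bullet> b) *\<^sub>R D [b] x) \<le> (\<Sum>b\<in>Basis. norm ((v \<bullet> b) *\<^sub>R D [b] x))"
      by (rule norm_sum)
    also have "\<dots> \<le> (\<Sum>b\<in>Basis. norm v * norm (D [b] x))"
      by (intro sum_mono) (auto intro: mult_right_mono Basis_le_norm)
    also have "\<dots> = norm v * (\<Sum>b\<in>Basis. norm (D [b] x))" by (simp add: sum_distrib_left)
    also have "\<dots> \<le> norm v * M"
    proof (intro mult_left_mono)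
      have "\<bar>\<Sum>b\<in>Basis. norm (D [b] x)\<bar> \<le> M" using M that by auto
      then show "(\<Sum>b\<in>Basis. norm (D [b] x)) \<le> M" by linarith
    qed simp
    finally show "norm (\<Sum>b\<in>Basis. (v \<bullet> b) *\<^sub>R D [b] x) \<le> M * norm v" by (simp add: mult.commute)
  qed
  have "M-lipschitz_on (cball y0 r) (D [])"
  proof (rule lipschitz_onI[OF _ M(1)])
    fix x y assume xy: "x \<in> cball y0 r" "y \<in> cball y0 r"
    show "dist (D [] x) (D [] y) \<le> M * dist x y"
      unfolding dist_norm by (rule differentiable_bound[OF convex_cball der on xy]) auto
  qed
  then show ?thesis using r by blast
qed

lemma Ck_curve_compose_smooth:
  fixes x :: "real \<Rightarrow> 'a::euclidean_space" and D :: "'a list \<Rightarrow> 'a \<Rightarrow> 'b::real_normed_vector"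
  assumes U: "open U" and xU: "\<forall>t\<in>I. x t \<in> U"
  shows "Ck_curve m I x \<Longrightarrow> smooth_derivs U D \<Longrightarrow> Ck_curve m I (\<lambda>t. D [] (x t))"
proof (induction m arbitrary: D)
  case 0 show ?case by (rule Ck_curve_0)
next
  case (Suc m)
  obtain x' where x': "\<forall>t\<in>I. (x has_vector_derivative x' t) (at t within I)" "Ck_curve m I x'"
    using Suc.prems(1) unfolding Ck_curve_Suc by blast
  have "Ck_curve m I (\<lambda>t. \<Sum>b\<in>Basis. (x' t \<bullet> b) *\<^sub>R D [b] (x t))"
  proof (rule Ck_curve_sum[OF finite_Basis])
    fix b :: 'a assume b: "b \<in> Basis"
    have c1: "Ck_curve m I (\<lambda>t. x' t \<bullet> b)"
      using Ck_curve_linear[OF bounded_linear_inner_left x'(2)] .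
    have c2: "Ck_curve m I (\<lambda>t. D ([] @ [b]) (x t))"
      using Suc.IH[OF Ck_curve_SucD[OF Suc.prems(1)] smooth_derivs_shift[OF Suc.prems(2)]] .
    show "Ck_curve m I (\<lambda>t. (x' t \<bullet> b) *\<^sub>R D [b] (x t))"
      using Ck_curve_bilinear[OF bounded_bilinear_scaleR c1 c2] by simp
  qed
  moreover have "\<forall>t\<in>I. ((\<lambda>t. D [] (x t)) has_vector_derivative (\<Sum>b\<in>Basis. (x' t \<bullet> b) *\<^sub>R D [b] (x t))) (at t within I)"
    using smooth_derivs_has_vector_derivative[OF U Suc.prems(2)] x'(1) xU by blast
  ultimately show ?case unfolding Ck_curve_Suc
    by (intro exI[of _ "\<lambda>t. \<Sum>b\<in>Basis. (x' t \<bullet> b) *\<^sub>R D [b] (x t)"]) simp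
qed

lemma is_interval_at_within_nontrivial:
  fixes I :: "real set"
  assumes I: "is_interval I" and t: "t \<in> I" and s: "s \<in> I" and st: "s \<noteq> t"
  shows "at t within I \<noteq> bot"
proof -
  have "t islimpt I"
  proof (cases "t < s")
    case True
    have "t islimpt {t..s}" using True by simp
    then show ?thesis using is_interval_Icc_subset[OF I t s] islimpt_subset by blast
  next
    case False
    then have "s < t" using st by simp
    have "t islimpt {s..t}" using \<open>s < t\<close> by simp
    then show ?thesis using is_interval_Icc_subset[OF I s t] islimpt_subset by blast
  qed
  then show ?thesis using trivial_limit_within by blast
qed

text \<open>For each \<open>m\<close>, \<open>Ck_curve m I c\<close> comes with its own chain of derivatives; on a
  nondegenerate interval derivatives are unique, so these chains agree and combine into one.\<close>

lemma smooth_curve_if_Ck_curve: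
  fixes c :: "real \<Rightarrow> 'b::real_normed_vector"
  assumes I: "is_interval I" and all: "\<forall>m. Ck_curve m I c"
  shows "smooth_curve I c"
proof (cases "\<exists>s\<in>I. \<exists>t\<in>I. s \<noteq> t")
  case False
  have "at t within I = bot" if "t \<in> I" for t
  proof -
    have "I \<subseteq> {t}" using False that by auto
    then have "\<not> t islimpt I" using islimpt_subset[of t I "{t}"] by (auto simp: islimpt_def)
    then show ?thesis using trivial_limit_within by blast
  qed
  then show ?thesis unfolding smooth_curve_def
    by (intro exI[of _ "\<lambda>j. c"]) (auto simp: has_vector_derivative_def intro!: has_derivative_bot bounded_linear_scaleR_left)
next
  case True
  have nb: "at t within I \<noteq> bot" if "t \<in> I" for t
    using True is_interval_at_within_nontrivial[OF I that] by metis
  have "\<forall>m. \<exists>E. E 0 = c \<and> (\<forall>j<Suc m. \<forall>t\<in>I. (E j has_vector_derivative E (Suc j) t) (at t within I))"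
    using all unfolding Ck_curve_def by blast
  then obtain E where E: "\<And>m. E m 0 = c" "\<And>m j t. j < Suc m \<Longrightarrow> t \<in> I \<Longrightarrow> (E m j has_vector_derivative E m (Suc j) t) (at t within I)"
    by metis
  have eq: "\<forall>a b. j \<le> a \<longrightarrow> j \<le> b \<longrightarrow> (\<forall>t\<in>I. E a j t = E b j t)" for j
  proof (induction j)
    case 0 then show ?case using E(1) by simp
  next
    case (Suc j)
    show ?case
    proof (intro allI impI ballI)
      fix a b t assume ab: "Suc j \<le> a" "Suc j \<le> b" and t: "t \<in> I"
      have da: "(E a j has_vector_derivative E a (Suc j) t) (at t within I)" using E(2) ab t by simp
      have db: "(E b j has_vector_derivative E b (Suc j) t) (at t within I)" using E(2) ab t by simp
      have "(E b j has_vector_derivative E a (Suc j) t) (at t within I)"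
        using has_vector_derivative_weaken[OF da t order_refl] Suc.IH ab by simp
      then show "E a (Suc j) t = E b (Suc j) t"
        using vector_derivative_unique_within[OF nb[OF t] _ db] by blast
    qed
  qed
  define D where "D j = E j j" for j
  show ?thesis unfolding smooth_curve_def
  proof (intro exI[of _ D] conjI allI ballI)
    show "D 0 = c" by (simp add: D_def E(1))
    fix m t assume t: "t \<in> I"
    have "(E (Suc m) m has_vector_derivative E (Suc m) (Suc m) t) (at t within I)" using E(2) t by simp
    then show "(D m has_vector_derivative D (Suc m) t) (at t within I)"
      unfolding D_def using has_vector_derivative_weaken[OF _ t order_refl, of "E (Suc m) m" _ "E m m"] eq[of m] by simp
  qed
qed

section \<open>Matrices\<close>

lemma matrix_add_rdistrib: "((A::real^'n^'m) + B) ** C = A ** C + B ** C"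
  by (vector matrix_matrix_mult_def sum.distrib[symmetric] field_simps)

lemma bounded_bilinear_matrix_mult:
  "bounded_bilinear ((**) :: real^'n::finite^'m::finite \<Rightarrow> real^'p::finite^'n \<Rightarrow> real^'p^'m)"
proof -
  have "bilinear ((**) :: real^'n^'m \<Rightarrow> real^'p^'n \<Rightarrow> real^'p^'m)"
    unfolding bilinear_def linear_iff
    by (simp add: matrix_add_ldistrib matrix_add_rdistrib matrix_scalar_ac scalar_matrix_assoc)
  then show ?thesis by (simp add: bilinear_conv_bounded_bilinear)
qed

lemmas matrix_mult_bilinear_simps =
  bounded_bilinear.add_left[OF bounded_bilinear_matrix_mult]
  bounded_bilinear.add_right[OF bounded_bilinear_matrix_mult]
  bounded_bilinear.diff_left[OF bounded_bilinear_matrix_mult]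
  bounded_bilinear.diff_right[OF bounded_bilinear_matrix_mult]
  bounded_bilinear.minus_left[OF bounded_bilinear_matrix_mult]
  bounded_bilinear.minus_right[OF bounded_bilinear_matrix_mult]
  bounded_bilinear.scaleR_left[OF bounded_bilinear_matrix_mult]
  bounded_bilinear.scaleR_right[OF bounded_bilinear_matrix_mult]

lemma bounded_bilinear_matrix_vector_mult:
  "bounded_bilinear ((*v) :: real^'n::finite^'m::finite \<Rightarrow> real^'n \<Rightarrow> real^'m)"
proof -
  have "bilinear ((*v) :: real^'n^'m \<Rightarrow> real^'n \<Rightarrow> real^'m)"
    unfolding bilinear_def linear_iff
    by (simp add: matrix_vector_right_distrib matrix_vector_mult_add_rdistrib matrix_vector_mult_scaleR)
      (simp add: matrix_vector_mult_def vec_eq_iff sum_distrib_left mult_ac)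
  then show ?thesis by (simp add: bilinear_conv_bounded_bilinear)
qed

lemmas matrix_vector_mult_bilinear_simps =
  bounded_bilinear.add_left[OF bounded_bilinear_matrix_vector_mult]
  bounded_bilinear.add_right[OF bounded_bilinear_matrix_vector_mult]
  bounded_bilinear.diff_left[OF bounded_bilinear_matrix_vector_mult]
  bounded_bilinear.diff_right[OF bounded_bilinear_matrix_vector_mult]
  bounded_bilinear.minus_left[OF bounded_bilinear_matrix_vector_mult]
  bounded_bilinear.minus_right[OF bounded_bilinear_matrix_vector_mult]
  bounded_bilinear.scaleR_left[OF bounded_bilinear_matrix_vector_mult]
  bounded_bilinear.scaleR_right[OF bounded_bilinear_matrix_vector_mult]

lemma bounded_linear_transpose: "bounded_linear (transpose :: real^'n::finite^'m::finite \<Rightarrow> real^'m^'n)"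
proof -
  have "linear (transpose :: real^'n^'m \<Rightarrow> real^'m^'n)"
    unfolding linear_iff by (simp add: transpose_def vec_eq_iff transpose_scalar)
  then show ?thesis by (simp add: linear_conv_bounded_linear)
qed

lemma inner_matrix_vector_mult: "(x::real^'m::finite) \<bullet> ((A::real^'n::finite^'m) *v y) = (transpose A *v x) \<bullet> y"
  by (simp add: transpose_matrix_vector dot_lmul_matrix)

lemma matrix_inv_orthogonal:
  fixes k :: "real^'n::finite^'n"
  assumes k: "transpose k ** k = mat 1" shows "matrix_inv k = transpose k"
proof -
  have k': "k ** transpose k = mat 1" using k matrix_left_right_inverse by blast
  have "matrix_inv k ** k = mat 1" "k ** matrix_inv k = mat 1"
    using someI_ex[of "\<lambda>A'. k ** A' = mat 1 \<and> A' ** k = mat 1"] k k' unfolding matrix_inv_def by blast+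
  then have "matrix_inv k = matrix_inv k ** (k ** transpose k)" using k' by simp
  also have "\<dots> = transpose k" using \<open>matrix_inv k ** k = mat 1\<close> by (simp add: matrix_mul_assoc)
  finally show ?thesis .
qed

lemma matrix_vector_mult_cancel: "g ** h = mat 1 \<Longrightarrow> g *v (h *v x) = (x::real^'n::finite)"
  by (simp add: matrix_vector_mul_assoc)

lemma matrix_vector_mult_matrix_linear: "linear f \<Longrightarrow> matrix f *v v = f (v::real^'n::finite)"
  using matrix_vector_mul(2)[of f] by metis

lemma has_vector_derivative_vec_lambda:
  fixes f :: "'i::finite \<Rightarrow> real \<Rightarrow> 'a::euclidean_space"
  assumes "\<And>i. (f i has_vector_derivative f' i) F"
  shows "((\<lambda>t. \<chi> i. f i t) has_vector_derivative (\<chi> i. f' i)) F"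
proof -
  have e: "(\<chi> i. g i) = (\<Sum>i\<in>UNIV. axis i (g i))" for g :: "'i \<Rightarrow> 'a"
    by (simp add: vec_eq_iff axis_def if_distrib sum.delta cong: if_cong)
  have bl: "bounded_linear (axis i :: 'a \<Rightarrow> 'a^'i)" for i
  proof -
    have "linear (axis i :: 'a \<Rightarrow> 'a^'i)"
      unfolding linear_iff by (simp add: axis_def vec_eq_iff)
    then show ?thesis by (simp add: linear_conv_bounded_linear)
  qed
  show ?thesis unfolding e
    by (intro has_vector_derivative_sum bounded_linear.has_vector_derivative[OF bl] assms)
qed

section \<open>Brackets and their transformations\<close>

declare transpose_matrix_vector[simp del]

lemma br_add_nu: "br (\<nu> + \<eta>) x y = br \<nu> x y + br \<eta> x y"
  by (simp add: br_def scaleR_add_right sum.distrib)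

lemma br_scale_nu: "br (c *\<^sub>R \<nu>) x y = c *\<^sub>R br \<nu> x y"
  by (simp add: br_def scaleR_sum_right mult_ac)

lemma br_minus_nu: "br (- \<nu>) x y = - br \<nu> x y"
  by (simp add: br_def sum_negf)

lemma br_diff_nu: "br (\<nu> - \<eta>) x y = br \<nu> x y - br \<eta> x y"
  by (simp add: br_def scaleR_diff_right sum_subtractf)

lemma br_zero_nu: "br 0 x y = 0"
  by (simp add: br_def)

lemma br_add_x: "br \<nu> (x + x') y = br \<nu> x y + br \<nu> x' y"
  by (simp add: br_def algebra_simps sum.distrib scaleR_add_left)

lemma br_scale_x: "br \<nu> (c *\<^sub>R x) y = c *\<^sub>R br \<nu> x y"
  by (simp add: br_def scaleR_sum_right mult_ac)

lemma br_add_y: "br \<nu> x (y + y') = br \<nu> x y + br \<nu> x y'"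
  by (simp add: br_def algebra_simps sum.distrib scaleR_add_left)

lemma br_scale_y: "br \<nu> x (c *\<^sub>R y) = c *\<^sub>R br \<nu> x y"
  by (simp add: br_def scaleR_sum_right mult.left_commute)

lemma bilinear_br: "bilinear (br \<nu>)"
  unfolding bilinear_def linear_iff by (simp add: br_add_x br_add_y br_scale_x br_scale_y)

lemma br_minus_x: "br \<nu> (- x) y = - br \<nu> x y"
  using linear_neg[of "\<lambda>x. br \<nu> x y"] bilinear_br unfolding bilinear_def by blast

lemma br_minus_y: "br \<nu> x (- y) = - br \<nu> x y"
  using linear_neg[of "br \<nu> x"] bilinear_br unfolding bilinear_def by blast

lemma br_diff_x: "br \<nu> (x - x') y = br \<nu> x y - br \<nu> x' y"
  using br_add_x[of \<nu> x "- x'"] br_minus_x[of \<nu> x'] by simp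

lemma br_diff_y: "br \<nu> x (y - y') = br \<nu> x y - br \<nu> x y'"
  using br_add_y[of \<nu> x y "- y'"] br_minus_y[of \<nu> x y'] by simp

lemma br_zero_x: "br \<nu> 0 y = 0" by (simp add: br_def)

lemma br_zero_y: "br \<nu> x 0 = 0" by (simp add: br_def)

lemmas br_lin = br_add_nu br_scale_nu br_minus_nu br_diff_nu br_zero_nu br_add_x br_scale_x br_add_y br_scale_y
  br_minus_x br_minus_y br_diff_x br_diff_y br_zero_x br_zero_y

lemma br_axis: "br \<nu> (axis i 1) (axis j 1) = \<nu> $ i $ j"
proof -
  have e: "(axis i 1 $ a * axis j 1 $ b) *\<^sub>R \<nu>$a$b = (if b = j then (if a = i then \<nu>$a$j else 0) else 0)" for a b
    by (simp add: axis_def)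
  have "br \<nu> (axis i 1) (axis j 1) = (\<Sum>a\<in>UNIV. \<Sum>b\<in>UNIV. (if b = j then (if a = i then \<nu>$a$j else 0) else 0))"
    unfolding br_def e ..
  also have "\<dots> = (\<Sum>a\<in>UNIV. (if a = i then \<nu>$a$j else 0))"
    by (subst sum.delta) simp_all
  also have "\<dots> = \<nu> $ i $ j"
    by (subst sum.delta) simp_all
  finally show ?thesis .
qed

lemma mkbr_br: "mkbr (br \<nu>) = \<nu>"
  unfolding mkbr_def br_axis by simp

lemma br_ext: assumes "\<And>x y. br \<nu> x y = br \<eta> x y" shows "\<nu> = \<eta>"
proof -
  have "br \<nu> = br \<eta>" using assms by (intro ext)
  then have "mkbr (br \<nu>) = mkbr (br \<eta>)" by simp
  then show ?thesis by (simp only: mkbr_br)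
qed

lemma br_mkbr:
  fixes f :: "real^'n::finite \<Rightarrow> real^'n \<Rightarrow> real^'n"
  assumes f: "bilinear f" shows "br (mkbr f) x y = f x y"
proof -
  have "br (mkbr f) = f"
  proof (rule bilinear_eq_stdbasis[OF bilinear_br f])
    fix a b :: "real^'n" assume "a \<in> Basis" "b \<in> Basis"
    then obtain i j where "a = axis i 1" "b = axis j 1" by (auto simp: Basis_vec_def)
    then show "br (mkbr f) a b = f a b" by (simp add: br_axis mkbr_def)
  qed
  then show ?thesis by simp
qed

lemma bilinear_compose3:
  assumes "bilinear g" "linear a" "linear b" "linear c"
  shows "bilinear (\<lambda>x y. a (g (b x) (c y)))"
  using assms unfolding bilinear_def linear_iff by auto

lemma bilinear_br_compose: "bilinear (\<lambda>x y. (A::real^'n^'n) *v br \<nu> (B *v x) (C *v y))"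
  by (rule bilinear_compose3[OF bilinear_br]) simp_all

lemma bilinear_piop_entries: "bilinear (\<lambda>x y. A *v br \<nu> x y - br \<nu> (A *v x) y - br \<nu> x (A *v y))"
  unfolding bilinear_def linear_iff
  by (simp add: br_lin algebra_simps matrix_vector_right_distrib matrix_vector_mult_scaleR)

lemma br_piop: "br (piop A \<nu>) x y = A *v br \<nu> x y - br \<nu> (A *v x) y - br \<nu> x (A *v y)"
  unfolding piop_def by (rule br_mkbr[OF bilinear_piop_entries])

lemma bilinear_piop: "bilinear (piop :: 'n::finite endo \<Rightarrow> 'n brkt \<Rightarrow> 'n brkt)"
  unfolding bilinear_def linear_iff
  by (intro conjI allI; rule br_ext; simp add: br_lin br_piop algebra_simps matrix_vector_mult_scaleR matrix_vector_mult_bilinear_simps)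

lemma bounded_bilinear_piop: "bounded_bilinear (piop :: 'n::finite endo \<Rightarrow> 'n brkt \<Rightarrow> 'n brkt)"
  using bilinear_piop by (simp add: bilinear_conv_bounded_bilinear)

definition br_curry :: "'n::finite brkt \<Rightarrow> real^'n \<Rightarrow> real^'n^'n" where
  "br_curry \<nu> x = (\<Sum>i\<in>UNIV. x$i *\<^sub>R \<nu>$i)"

definition lin_comb :: "real^'n::finite^'n \<Rightarrow> real^'n \<Rightarrow> real^'n" where
  "lin_comb M y = (\<Sum>j\<in>UNIV. y$j *\<^sub>R M$j)"

lemma br_eq_lin_comb_br_curry: "br \<nu> x y = lin_comb (br_curry \<nu> x) y"
  unfolding br_def br_curry_def lin_comb_def
  by (subst sum.swap) (simp add: scaleR_sum_right mult.commute)

lemma bounded_bilinear_br_curry: "bounded_bilinear (br_curry :: 'n::finite brkt \<Rightarrow> _)"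
proof -
  have "bilinear (br_curry :: 'n::finite brkt \<Rightarrow> _)"
    unfolding bilinear_def linear_iff br_curry_def
    by (simp add: scaleR_add_right scaleR_add_left sum.distrib scaleR_sum_right mult.commute)
  then show ?thesis by (simp add: bilinear_conv_bounded_bilinear)
qed

lemma bounded_bilinear_lin_comb: "bounded_bilinear (lin_comb :: real^'n::finite^'n \<Rightarrow> _)"
proof -
  have "bilinear (lin_comb :: real^'n::finite^'n \<Rightarrow> _)"
    unfolding bilinear_def linear_iff lin_comb_def
    by (simp add: scaleR_add_right scaleR_add_left sum.distrib scaleR_sum_right mult.commute)
  then show ?thesis by (simp add: bilinear_conv_bounded_bilinear)
qed

lemma br_has_vector_derivative:
  assumes "(\<nu> has_vector_derivative \<nu>') (at t within S)"
    and "(x has_vector_derivative x') (at t within S)"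
    and "(y has_vector_derivative y') (at t within S)"
  shows "((\<lambda>t. br (\<nu> t) (x t) (y t)) has_vector_derivative
           (br \<nu>' (x t) (y t) + br (\<nu> t) x' (y t) + br (\<nu> t) (x t) y')) (at t within S)"
proof -
  have "((\<lambda>t. br_curry (\<nu> t) (x t)) has_vector_derivative br_curry (\<nu> t) x' + br_curry \<nu>' (x t)) (at t within S)"
    by (rule bounded_bilinear.has_vector_derivative[OF bounded_bilinear_br_curry assms(1,2)])
  from bounded_bilinear.has_vector_derivative[OF bounded_bilinear_lin_comb this assms(3)]
  show ?thesis unfolding br_eq_lin_comb_br_curry
    by (simp add: algebra_simps bounded_bilinear.add_left[OF bounded_bilinear_lin_comb])
qed

lemma bounded_linear_br_bracket: "bounded_linear (\<lambda>\<nu>. br \<nu> x y)"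
  unfolding br_eq_lin_comb_br_curry by (intro bounded_linear_compose[OF bounded_bilinear.bounded_linear_left[OF bounded_bilinear_lin_comb]]
      bounded_bilinear.bounded_linear_left[OF bounded_bilinear_br_curry])

lemma continuous_on_br_compose: "continuous_on UNIV (\<lambda>\<nu>. br \<nu> (f \<nu>) (g \<nu>))" if "continuous_on UNIV f" "continuous_on UNIV g"
  unfolding br_eq_lin_comb_br_curry
  by (intro bounded_bilinear.continuous_on[OF bounded_bilinear_lin_comb] bounded_bilinear.continuous_on[OF bounded_bilinear_br_curry] that continuous_on_id)

lemma continuous_on_br_bracket: "continuous_on UNIV (\<lambda>\<nu>. br \<nu> x y)"
  by (rule linear_continuous_on[OF bounded_linear_br_bracket])

lemma closed_Cset: "closed (Cset J)"
proof -
  have c1: "closed {\<nu>. \<forall>x y. br \<nu> x y = - br \<nu> y x}"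
  proof (intro closed_Collect_all closed_Collect_eq)
    fix x y show "continuous_on UNIV (\<lambda>\<nu>. br \<nu> x y)" by (rule continuous_on_br_bracket)
    show "continuous_on UNIV (\<lambda>\<nu>. - br \<nu> y x)" by (intro continuous_on_minus continuous_on_br_bracket)
  qed
  have c2: "closed {\<nu>. \<forall>x y z. br \<nu> x (br \<nu> y z) + br \<nu> y (br \<nu> z x) + br \<nu> z (br \<nu> x y) = 0}"
  proof (intro closed_Collect_all closed_Collect_eq)
    fix x y z
    show "continuous_on UNIV (\<lambda>\<nu>. br \<nu> x (br \<nu> y z) + br \<nu> y (br \<nu> z x) + br \<nu> z (br \<nu> x y))"
      by (intro continuous_on_add continuous_on_br_compose continuous_on_br_bracket continuous_on_const)
  qed (rule continuous_on_const)
  have c3: "closed {\<nu>. \<forall>x y. br \<nu> (J *v x) y = J *v br \<nu> x y}"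
  proof (intro closed_Collect_all closed_Collect_eq)
    fix x y
    show "continuous_on UNIV (\<lambda>\<nu>. br \<nu> (J *v x) y)" by (rule continuous_on_br_bracket)
    show "continuous_on UNIV (\<lambda>\<nu>. J *v br \<nu> x y)"
      by (rule bounded_linear.continuous_on[OF bounded_bilinear.bounded_linear_right[OF bounded_bilinear_matrix_vector_mult] continuous_on_br_bracket])
  qed
  show ?thesis unfolding Cset_def is_bracket_def
    by (intro closed_Collect_conj c1 c2 c3)
qed

definition br_transform :: "'n::finite endo \<Rightarrow> 'n endo \<Rightarrow> 'n brkt \<Rightarrow> 'n brkt" where
  "br_transform a b \<nu> = mkbr (\<lambda>x y. a *v br \<nu> (b *v x) (b *v y))"

lemma br_br_transform: "br (br_transform a b \<nu>) x y = a *v br \<nu> (b *v x) (b *v y)"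
  unfolding br_transform_def by (rule br_mkbr[OF bilinear_br_compose])

lemma br_transform_id: "br_transform (mat 1) (mat 1) \<nu> = \<nu>"
  by (rule br_ext) (simp add: br_br_transform)

lemma act_orthogonal: "transpose k ** k = mat 1 \<Longrightarrow> act k \<nu> = br_transform k (transpose k) \<nu>"
  unfolding act_def br_transform_def by (simp add: matrix_inv_orthogonal)

lemma act_br_transform_transpose:
  assumes "transpose k ** k = mat 1"
  shows "act k (br_transform (transpose k) k \<nu>) = \<nu>"
proof -
  have "k ** transpose k = mat 1" using assms matrix_left_right_inverse by blast
  then have "k *v (transpose k *v x) = x" for x by (simp add: matrix_vector_mul_assoc)
  then show ?thesis
    unfolding act_orthogonal[OF assms] by (intro br_ext) (simp add: br_br_transform)
qed

lemma is_bracket_br_transform: assumes "is_bracket \<nu>" shows "is_bracket (br_transform a b \<nu>)"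
  unfolding is_bracket_def br_br_transform
proof (intro allI)
  fix x y
  have "br \<nu> (b *v x) (b *v y) = - br \<nu> (b *v y) (b *v x)" using assms unfolding is_bracket_def by blast
  then show "a *v br \<nu> (b *v x) (b *v y) = - (a *v br \<nu> (b *v y) (b *v x))" by (simp only: matrix_vector_mult_bilinear_simps)
qed

lemma br_transform_Cset:
  fixes J :: "'n::finite endo"
  assumes C: "\<nu>\<^sub>0 \<in> Cset J" and gh: "g ** h = mat 1"
    and gJ: "g ** J = J ** g" and hJ: "h ** J = J ** h"
  shows "br_transform h g \<nu>\<^sub>0 \<in> Cset J"
proof -
  have sk: "is_bracket \<nu>\<^sub>0" and jac: "\<forall>x y z. br \<nu>\<^sub>0 x (br \<nu>\<^sub>0 y z) + br \<nu>\<^sub>0 y (br \<nu>\<^sub>0 z x) + br \<nu>\<^sub>0 z (br \<nu>\<^sub>0 x y) = 0"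
    and cJ: "\<forall>x y. br \<nu>\<^sub>0 (J *v x) y = J *v br \<nu>\<^sub>0 x y"
    using C unfolding Cset_def by auto
  have "is_bracket (br_transform h g \<nu>\<^sub>0)" by (rule is_bracket_br_transform[OF sk])
  moreover have "br (br_transform h g \<nu>\<^sub>0) x (br (br_transform h g \<nu>\<^sub>0) y z) + br (br_transform h g \<nu>\<^sub>0) y (br (br_transform h g \<nu>\<^sub>0) z x)
      + br (br_transform h g \<nu>\<^sub>0) z (br (br_transform h g \<nu>\<^sub>0) x y) = 0" for x y z
  proof -
    have "br (br_transform h g \<nu>\<^sub>0) x (br (br_transform h g \<nu>\<^sub>0) y z) + br (br_transform h g \<nu>\<^sub>0) y (br (br_transform h g \<nu>\<^sub>0) z x)
      + br (br_transform h g \<nu>\<^sub>0) z (br (br_transform h g \<nu>\<^sub>0) x y)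
      = h *v (br \<nu>\<^sub>0 (g *v x) (br \<nu>\<^sub>0 (g *v y) (g *v z)) + br \<nu>\<^sub>0 (g *v y) (br \<nu>\<^sub>0 (g *v z) (g *v x))
          + br \<nu>\<^sub>0 (g *v z) (br \<nu>\<^sub>0 (g *v x) (g *v y)))"
      by (simp add: br_br_transform matrix_vector_mult_cancel[OF gh] matrix_vector_right_distrib)
    also have "\<dots> = 0" using jac by simp
    finally show ?thesis .
  qed
  moreover have "br (br_transform h g \<nu>\<^sub>0) (J *v x) y = J *v br (br_transform h g \<nu>\<^sub>0) x y" for x y
  proof -
    have gx: "g *v (J *v x) = J *v (g *v x)" by (simp add: matrix_vector_mul_assoc gJ)
    have "br (br_transform h g \<nu>\<^sub>0) (J *v x) y = h *v br \<nu>\<^sub>0 (J *v (g *v x)) (g *v y)"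
      by (simp only: br_br_transform gx)
    also have "\<dots> = h *v (J *v br \<nu>\<^sub>0 (g *v x) (g *v y))" by (simp only: cJ[rule_format])
    also have "\<dots> = J *v (h *v br \<nu>\<^sub>0 (g *v x) (g *v y))" by (simp only: matrix_vector_mul_assoc hJ)
    also have "\<dots> = J *v br (br_transform h g \<nu>\<^sub>0) x y" by (simp only: br_br_transform)
    finally show ?thesis .
  qed
  ultimately show ?thesis unfolding Cset_def by blast
qed

lemma br_transform_has_vector_derivative:
  assumes a: "(a has_vector_derivative a') (at t within S)"
    and b: "(b has_vector_derivative b') (at t within S)"
    and n: "(\<nu> has_vector_derivative \<nu>') (at t within S)"
  shows "((\<lambda>t. br_transform (a t) (b t) (\<nu> t)) has_vector_derivative
     mkbr (\<lambda>x y. a' *v br (\<nu> t) (b t *v x) (b t *v y) + a t *v br \<nu>' (b t *v x) (b t *v y)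
              + a t *v br (\<nu> t) (b' *v x) (b t *v y) + a t *v br (\<nu> t) (b t *v x) (b' *v y))) (at t within S)"
proof -
  have bx: "((\<lambda>t. b t *v x) has_vector_derivative b' *v x) (at t within S)" for x
    using bounded_bilinear.has_vector_derivative[OF bounded_bilinear_matrix_vector_mult b, of "\<lambda>_. x" 0] by simp
  have "((\<lambda>t. a t *v br (\<nu> t) (b t *v x) (b t *v y)) has_vector_derivative
      a' *v br (\<nu> t) (b t *v x) (b t *v y) + a t *v br \<nu>' (b t *v x) (b t *v y)
              + a t *v br (\<nu> t) (b' *v x) (b t *v y) + a t *v br (\<nu> t) (b t *v x) (b' *v y)) (at t within S)" for x y
    using bounded_bilinear.has_vector_derivative[OF bounded_bilinear_matrix_vector_mult a br_has_vector_derivative[OF n bx bx]]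
    by (simp add: algebra_simps matrix_vector_right_distrib)
  then show ?thesis unfolding br_transform_def mkbr_def
    by (intro has_vector_derivative_vec_lambda)
qed

lemma br_transform_flow:
  assumes h: "(h has_vector_derivative - (Ah ** h t)) (at t within S)"
    and g: "(g has_vector_derivative g t ** Ah) (at t within S)"
  shows "((\<lambda>t. br_transform (h t) (g t) \<nu>\<^sub>0) has_vector_derivative - piop Ah (br_transform (h t) (g t) \<nu>\<^sub>0)) (at t within S)"
proof -
  have e: "mkbr (\<lambda>x y. - (Ah ** h t) *v br \<nu>\<^sub>0 (g t *v x) (g t *v y) + h t *v br 0 (g t *v x) (g t *v y)
              + h t *v br \<nu>\<^sub>0 ((g t ** Ah) *v x) (g t *v y) + h t *v br \<nu>\<^sub>0 (g t *v x) ((g t ** Ah) *v y))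
       = - piop Ah (br_transform (h t) (g t) \<nu>\<^sub>0)"
  proof -
    have "mkbr (\<lambda>x y. - (Ah ** h t) *v br \<nu>\<^sub>0 (g t *v x) (g t *v y) + h t *v br 0 (g t *v x) (g t *v y)
              + h t *v br \<nu>\<^sub>0 ((g t ** Ah) *v x) (g t *v y) + h t *v br \<nu>\<^sub>0 (g t *v x) ((g t ** Ah) *v y))
        = mkbr (br (- piop Ah (br_transform (h t) (g t) \<nu>\<^sub>0)))"
      by (rule arg_cong[where f=mkbr], intro ext)
        (simp add: br_piop br_br_transform br_lin matrix_vector_mult_bilinear_simps matrix_vector_mul_assoc[symmetric] algebra_simps)
    then show ?thesis by (simp only: mkbr_br)
  qed
  show ?thesis
    using br_transform_has_vector_derivative[OF h g has_vector_derivative_const[of \<nu>\<^sub>0]] unfolding e .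
qed

section \<open>The operator \<open>P\<close>\<close>

definition Pop_polar :: "'n::{finite,linorder} brkt \<Rightarrow> 'n brkt \<Rightarrow> 'n endo" where
  "Pop_polar \<nu> \<eta> = matrix (\<lambda>v. \<Sum>(i,j)\<in>{(i,j). i < j}.
      (v \<bullet> br \<nu> (axis i 1) (axis j 1)) *\<^sub>R br \<eta> (axis i 1) (axis j 1))"

lemma Pop_eq_Pop_polar: "Pop \<nu> = Pop_polar \<nu> \<nu>"
  unfolding Pop_def Pop_polar_def ..

lemma bounded_bilinear_Pop_polar: "bounded_bilinear (Pop_polar :: 'n::{finite,linorder} brkt \<Rightarrow> _)"
proof -
  have "bilinear (Pop_polar :: 'n::{finite,linorder} brkt \<Rightarrow> _)"
    unfolding bilinear_def linear_iff Pop_polar_def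
    by (simp add: matrix_def vec_eq_iff br_lin inner_add_right scaleR_add_left scaleR_add_right
        sum.distrib case_prod_unfold scaleR_sum_right sum_distrib_left mult_ac)
  then show ?thesis by (simp add: bilinear_conv_bounded_bilinear)
qed

lemma Pop_lipschitz_on_cball: "\<exists>K. K-lipschitz_on (cball c r) (Pop :: 'n::{finite,linorder} brkt \<Rightarrow> _)"
proof -
  obtain K where K: "K > 0" "\<And>a b. norm (Pop_polar a b) \<le> norm a * norm (b :: 'n brkt) * K"
    using bounded_bilinear.pos_bounded[OF bounded_bilinear_Pop_polar] by blast
  define R where "R = norm c + \<bar>r\<bar>"
  have "(K * (R + R))-lipschitz_on (cball c r) Pop"
  proof (rule lipschitz_onI)
    fix a b :: "'n brkt" assume ab: "a \<in> cball c r" "b \<in> cball c r"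
    have "Pop a - Pop b = Pop_polar (a - b) a + Pop_polar b (a - b)"
      unfolding Pop_eq_Pop_polar
      by (simp add: bounded_bilinear.diff_left[OF bounded_bilinear_Pop_polar]
          bounded_bilinear.diff_right[OF bounded_bilinear_Pop_polar])
    then have "norm (Pop a - Pop b) \<le> norm (Pop_polar (a - b) a) + norm (Pop_polar b (a - b))"
      by (simp add: norm_triangle_ineq)
    also have "\<dots> \<le> norm (a - b) * norm a * K + norm b * norm (a - b) * K"
      using K(2) by (intro add_mono)
    also have "\<dots> = K * (norm a + norm b) * norm (a - b)" by (simp add: algebra_simps)
    also have "\<dots> \<le> K * (R + R) * norm (a - b)"
      using norm_le_of_mem_cball[OF ab(1)] norm_le_of_mem_cball[OF ab(2)] K(1)
      unfolding R_def by (intro mult_right_mono mult_left_mono add_mono) auto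
    finally show "dist (Pop a) (Pop b) \<le> K * (R + R) * dist a b" by (simp add: dist_norm)
  qed (use K(1) in \<open>simp add: R_def\<close>)
  then show ?thesis by blast
qed

lemma sum_bilinear_orthogonal_columns:
  fixes q :: "real^'n::finite \<Rightarrow> real^'n \<Rightarrow> real" and k :: "real^'n^'n"
  assumes q: "bilinear q" and k: "k ** transpose k = mat 1"
  shows "(\<Sum>i\<in>UNIV. q (k *v axis i 1) (k *v axis i 1)) = (\<Sum>i\<in>UNIV. q (axis i 1) (axis i 1))"
proof -
  have col: "k *v axis i 1 = (\<Sum>a\<in>UNIV. k$a$i *\<^sub>R axis a 1)" for i
  proof -
    have c: "(k *v axis i 1) $ a = k$a$i" for a
      by (simp add: matrix_vector_mult_def axis_def if_distrib sum.delta cong: if_cong)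
    show ?thesis using basis_expansion[of "k *v axis i 1"] by (simp add: c scalar_mult_eq_scaleR)
  qed
  have qe: "q (k *v axis i 1) (k *v axis i 1) = (\<Sum>a\<in>UNIV. \<Sum>c\<in>UNIV. (k$a$i * k$c$i) * q (axis a 1) (axis c 1))" for i
    unfolding col bilinear_sum[OF q] sum.cartesian_product[symmetric]
    by (simp add: bilinear_lmul[OF q] bilinear_rmul[OF q] mult_ac)
  have kk: "(\<Sum>i\<in>UNIV. k$a$i * k$c$i) = (if a = c then 1 else 0)" for a c
  proof -
    have "(k ** transpose k) $ a $ c = (\<Sum>i\<in>UNIV. k$a$i * k$c$i)"
      by (simp add: matrix_matrix_mult_def transpose_def)
    then show ?thesis using k by (simp add: mat_def)
  qed
  have "(\<Sum>i\<in>UNIV. q (k *v axis i 1) (k *v axis i 1))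
        = (\<Sum>a\<in>UNIV. \<Sum>c\<in>UNIV. (\<Sum>i\<in>UNIV. k$a$i * k$c$i) * q (axis a 1) (axis c 1))"
    unfolding qe sum_distrib_right
    by (subst sum.swap, rule sum.cong[OF refl], subst sum.swap, simp)
  also have "\<dots> = (\<Sum>a\<in>UNIV. q (axis a 1) (axis a 1))"
  proof -
    have "(if a = c then 1 else 0) * q (axis a 1) (axis c 1) = (if c = a then q (axis a 1) (axis a 1) else 0)" for a c :: 'n
      by auto
    then show ?thesis unfolding kk by (simp add: sum.delta)
  qed
  finally show ?thesis .
qed

definition Pfull :: "'n::finite brkt \<Rightarrow> real^'n \<Rightarrow> real^'n" where
  "Pfull \<nu> v = (\<Sum>i\<in>UNIV. \<Sum>j\<in>UNIV. (v \<bullet> br \<nu> (axis i 1) (axis j 1)) *\<^sub>R br \<nu> (axis i 1) (axis j 1))"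

lemma Pfull_inner: "Pfull \<nu> v \<bullet> u = (\<Sum>i\<in>UNIV. \<Sum>j\<in>UNIV. (v \<bullet> br \<nu> (axis i 1) (axis j 1)) * (br \<nu> (axis i 1) (axis j 1) \<bullet> u))"
  unfolding Pfull_def by (simp add: inner_sum_left)

lemma is_bracket_entries:
  assumes "is_bracket \<nu>" shows "\<nu> $ j $ i = - \<nu> $ i $ j"
  using assms[unfolded is_bracket_def, rule_format, of "axis j 1" "axis i 1"] by (simp add: br_axis)

lemma Pop_eq_half_Pfull:
  fixes \<nu> :: "'n::{finite,linorder} brkt"
  assumes sk: "is_bracket \<nu>"
  shows "Pop \<nu> *v v = (1/2) *\<^sub>R Pfull \<nu> v"
proof -
  define g where "g p = (v \<bullet> \<nu> $ fst p $ snd p) *\<^sub>R \<nu> $ fst p $ snd p" for p :: "'n \<times> 'n"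
  have lin: "linear (\<lambda>v. \<Sum>(i,j)\<in>{(i,j). i < j}. (v \<bullet> br \<nu> (axis i 1) (axis j 1)) *\<^sub>R br \<nu> (axis i 1) (axis j 1))"
    unfolding linear_iff by (simp add: inner_add_left scaleR_add_left sum.distrib case_prod_unfold scaleR_sum_right)
  have P: "Pop \<nu> *v v = (\<Sum>p\<in>{(i,j). i < j}. g p)"
    unfolding Pop_def matrix_vector_mult_matrix_linear[OF lin] by (simp add: g_def br_axis case_prod_unfold)
  define Slt where "Slt = {(i::'n,j). i < j}"
  define Sgt where "Sgt = {(i::'n,j). j < i}"
  define Seq where "Seq = {(i::'n,j). i = j}"
  have U: "UNIV = (Slt \<union> Sgt) \<union> Seq" unfolding Slt_def Sgt_def Seq_def by auto
  have d1: "Slt \<inter> Sgt = {}" unfolding Slt_def Sgt_def by auto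
  have d2: "(Slt \<union> Sgt) \<inter> Seq = {}" unfolding Slt_def Sgt_def Seq_def by auto
  have gsw: "g (prod.swap p) = g p" for p
    using is_bracket_entries[OF sk, of "fst p" "snd p"] by (simp add: g_def)
  have z: "\<nu> $ a $ a = 0" for a
    using is_bracket_entries[OF sk, of a a] by (simp add: vec_eq_iff)
  have g0: "p \<in> Seq \<Longrightarrow> g p = 0" for p
    by (auto simp: g_def Seq_def z)
  have sw: "Sgt = prod.swap ` Slt" unfolding Sgt_def Slt_def by auto
  have "(\<Sum>p\<in>Sgt. g p) = (\<Sum>p\<in>Slt. g (prod.swap p))"
    unfolding sw using sum.reindex[of prod.swap Slt g] by (simp add: comp_def)
  then have sgt: "(\<Sum>p\<in>Sgt. g p) = (\<Sum>p\<in>Slt. g p)" by (simp only: gsw)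
  have "(\<Sum>p\<in>UNIV. g p) = (\<Sum>p\<in>Slt \<union> Sgt. g p) + (\<Sum>p\<in>Seq. g p)"
    unfolding U by (rule sum.union_disjoint[OF _ _ d2]) simp_all
  also have "(\<Sum>p\<in>Slt \<union> Sgt. g p) = (\<Sum>p\<in>Slt. g p) + (\<Sum>p\<in>Sgt. g p)"
    by (rule sum.union_disjoint[OF _ _ d1]) simp_all
  also have "(\<Sum>p\<in>Seq. g p) = 0" using g0 by simp
  finally have "(\<Sum>p\<in>UNIV. g p) = 2 *\<^sub>R (\<Sum>p\<in>Slt. g p)" using sgt by (simp add: scaleR_2)
  moreover have "(\<Sum>p\<in>UNIV. g p) = Pfull \<nu> v"
    unfolding Pfull_def br_axis g_def UNIV_Times_UNIV[symmetric] sum.cartesian_product by (simp add: case_prod_unfold)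
  ultimately show ?thesis unfolding P Slt_def by simp
qed

lemma bilinear_br_quadratic:
  "bilinear (\<lambda>y y'. (v \<bullet> br \<nu> x y) * (br \<nu> x y' \<bullet> u))"
  "bilinear (\<lambda>x x'. (v \<bullet> br \<nu> x y) * (br \<nu> x' y \<bullet> u))"
  unfolding bilinear_def linear_iff
  by (simp_all add: br_lin inner_add_left inner_add_right algebra_simps)

lemma Pfull_br_transform:
  fixes k :: "real^'n::finite^'n"
  assumes o: "transpose k ** k = mat 1"
  shows "Pfull (br_transform k (transpose k) \<nu>) v = k *v Pfull \<nu> (transpose k *v v)"
proof -
  have o': "transpose k ** transpose (transpose k) = mat 1" using o by simp
  define v' where "v' = transpose k *v v"
  show ?thesis
  proof (rule vector_eq_rdot[THEN iffD1], intro allI)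
    fix u
    define u' where "u' = transpose k *v u"
    define F where "F x y = (v' \<bullet> br \<nu> x y) * (br \<nu> x y \<bullet> u')" for x y
    have "Pfull (br_transform k (transpose k) \<nu>) v \<bullet> u = (\<Sum>i\<in>UNIV. \<Sum>j\<in>UNIV. F (transpose k *v axis i 1) (transpose k *v axis j 1))"
      unfolding Pfull_inner br_br_transform F_def v'_def u'_def
      by (simp add: inner_matrix_vector_mult inner_commute[of "k *v _"])
    also have "\<dots> = (\<Sum>i\<in>UNIV. \<Sum>j\<in>UNIV. F (transpose k *v axis i 1) (axis j 1))"
      unfolding F_def by (rule sum.cong[OF refl], rule sum_bilinear_orthogonal_columns[OF bilinear_br_quadratic(1) o'])
    also have "\<dots> = (\<Sum>j\<in>UNIV. \<Sum>i\<in>UNIV. F (transpose k *v axis i 1) (axis j 1))"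
      by (rule sum.swap)
    also have "\<dots> = (\<Sum>j\<in>UNIV. \<Sum>i\<in>UNIV. F (axis i 1) (axis j 1))"
      unfolding F_def by (rule sum.cong[OF refl], rule sum_bilinear_orthogonal_columns[OF bilinear_br_quadratic(2) o'])
    also have "\<dots> = (\<Sum>i\<in>UNIV. \<Sum>j\<in>UNIV. F (axis i 1) (axis j 1))"
      by (rule sum.swap)
    also have "\<dots> = Pfull \<nu> v' \<bullet> u'" unfolding Pfull_inner F_def ..
    also have "\<dots> = (k *v Pfull \<nu> v') \<bullet> u" unfolding u'_def
      by (simp add: inner_matrix_vector_mult inner_commute[of "k *v _"] inner_commute[of "Pfull \<nu> v'"])
    finally show "Pfull (br_transform k (transpose k) \<nu>) v \<bullet> u = (k *v Pfull \<nu> (transpose k *v v)) \<bullet> u"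
      unfolding v'_def .
  qed
qed

lemma Pop_br_transform:
  fixes \<nu> :: "'n::{finite,linorder} brkt" and k :: "'n endo"
  assumes o: "transpose k ** k = mat 1" and sk: "is_bracket \<nu>"
  shows "Pop (br_transform k (transpose k) \<nu>) = k ** Pop \<nu> ** transpose k"
  unfolding matrix_eq
proof
  fix v
  have "(k ** Pop \<nu> ** transpose k) *v v = k *v (Pop \<nu> *v (transpose k *v v))"
    by (simp add: matrix_vector_mul_assoc matrix_mul_assoc)
  also have "\<dots> = k *v ((1/2) *\<^sub>R Pfull \<nu> (transpose k *v v))" by (simp only: Pop_eq_half_Pfull[OF sk])
  also have "\<dots> = (1/2) *\<^sub>R (k *v Pfull \<nu> (transpose k *v v))" by (rule matrix_vector_mult_scaleR)
  also have "\<dots> = (1/2) *\<^sub>R Pfull (br_transform k (transpose k) \<nu>) v" by (simp only: Pfull_br_transform[OF o])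
  also have "\<dots> = Pop (br_transform k (transpose k) \<nu>) *v v" by (simp only: Pop_eq_half_Pfull[OF is_bracket_br_transform[OF sk]])
  finally show "Pop (br_transform k (transpose k) \<nu>) *v v = (k ** Pop \<nu> ** transpose k) *v v" by simp
qed

lemma Pfull_J:
  fixes J :: "real^'n::finite^'n"
  assumes o: "transpose J ** J = mat 1" and C: "\<forall>x y. br \<nu> (J *v x) y = J *v br \<nu> x y"
  shows "Pfull \<nu> v = J *v Pfull \<nu> (transpose J *v v)"
proof (rule vector_eq_rdot[THEN iffD1], intro allI)
  fix u
  have o': "J ** transpose J = mat 1" using o matrix_left_right_inverse by blast
  define F where "F x y = (v \<bullet> br \<nu> x y) * (br \<nu> x y \<bullet> u)" for x y
  have "Pfull \<nu> v \<bullet> u = (\<Sum>j\<in>UNIV. \<Sum>i\<in>UNIV. F (axis i 1) (axis j 1))"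
    unfolding Pfull_inner F_def by (rule sum.swap)
  also have "\<dots> = (\<Sum>j\<in>UNIV. \<Sum>i\<in>UNIV. F (J *v axis i 1) (axis j 1))"
    unfolding F_def by (rule sum.cong[OF refl], rule sum_bilinear_orthogonal_columns[OF bilinear_br_quadratic(2) o', symmetric])
  also have "\<dots> = (\<Sum>i\<in>UNIV. \<Sum>j\<in>UNIV. F (J *v axis i 1) (axis j 1))"
    by (rule sum.swap)
  also have "\<dots> = Pfull \<nu> (transpose J *v v) \<bullet> (transpose J *v u)"
    unfolding Pfull_inner F_def C[rule_format]
    by (simp add: inner_matrix_vector_mult inner_commute[of "J *v _"])
  also have "\<dots> = (J *v Pfull \<nu> (transpose J *v v)) \<bullet> u"
    by (simp add: inner_matrix_vector_mult inner_commute[of "J *v _"] inner_commute[of "Pfull \<nu> _"])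
  finally show "Pfull \<nu> v \<bullet> u = (J *v Pfull \<nu> (transpose J *v v)) \<bullet> u" .
qed

lemma Pop_commute_J:
  fixes J :: "'n::{finite,linorder} endo"
  assumes o: "transpose J ** J = mat 1" and C: "\<nu> \<in> Cset J"
  shows "Pop \<nu> ** J = J ** Pop \<nu>"
  unfolding matrix_eq
proof
  fix v
  have sk: "is_bracket \<nu>" and c: "\<forall>x y. br \<nu> (J *v x) y = J *v br \<nu> x y"
    using C unfolding Cset_def by auto
  have "Pfull \<nu> (J *v v) = J *v Pfull \<nu> (transpose J *v (J *v v))" by (rule Pfull_J[OF o c])
  also have "transpose J *v (J *v v) = v" by (simp add: matrix_vector_mul_assoc o)
  finally have "Pfull \<nu> (J *v v) = J *v Pfull \<nu> v" .
  then show "(Pop \<nu> ** J) *v v = (J ** Pop \<nu>) *v v"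
    unfolding matrix_vector_mul_assoc[symmetric] Pop_eq_half_Pfull[OF sk]
    by (simp add: matrix_vector_mult_scaleR)
qed

definition complex_linear_part :: "'n::finite endo \<Rightarrow> 'n endo \<Rightarrow> 'n endo" where
  "complex_linear_part J A = (1/2) *\<^sub>R (A - J ** A ** J)"

lemma complex_linear_part_commute:
  fixes J :: "'n::finite endo"
  assumes J: "J ** J = - mat 1"
  shows "complex_linear_part J A ** J = J ** complex_linear_part J A"
proof -
  have "(A - J ** A ** J) ** J = A ** J + J ** A"
    by (simp add: matrix_mult_bilinear_simps matrix_mul_assoc[symmetric] J)
  moreover have "J ** (A - J ** A ** J) = J ** A + A ** J"
    by (simp add: matrix_mult_bilinear_simps matrix_mul_assoc J)
  ultimately show ?thesis
    unfolding complex_linear_part_def bounded_bilinear.scaleR_left[OF bounded_bilinear_matrix_mult]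
      bounded_bilinear.scaleR_right[OF bounded_bilinear_matrix_mult]
    by (simp add: add.commute)
qed

lemma norm_diff_complex_linear_part_le:
  fixes J :: "'n::finite endo"
  assumes J: "J ** J = - mat 1"
  obtains C where "C \<ge> 0"
    "\<And>A Y. Y ** J = J ** Y \<Longrightarrow> norm (A - complex_linear_part J A) \<le> C * norm (A - Y)"
proof -
  obtain K where K: "\<And>a b. norm ((a :: 'n endo) ** (b :: 'n endo)) \<le> norm a * norm b * K" "K > 0"
    using bounded_bilinear.pos_bounded[OF bounded_bilinear_matrix_mult] by blast
  define C where "C = 1 + norm J * norm J * K * K"
  have "norm (A - complex_linear_part J A) \<le> C * norm (A - Y)" if Y: "Y ** J = J ** Y" for A Y
  proof -
    define W where "W = A - Y"
    have "J ** Y ** J = - Y"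
      by (simp add: matrix_mul_assoc[symmetric] Y[symmetric]) (simp add: matrix_mul_assoc J matrix_mult_bilinear_simps)
    then have "W + J ** W ** J = A + J ** A ** J"
      unfolding W_def by (simp add: matrix_mult_bilinear_simps)
    moreover have "A - complex_linear_part J A = (1/2) *\<^sub>R (A + J ** A ** J)"
    proof -
      have "A = (1/2) *\<^sub>R A + (1/2) *\<^sub>R A" by (simp flip: scaleR_add_left)
      then show ?thesis unfolding complex_linear_part_def by (simp add: algebra_simps)
    qed
    ultimately have "A - complex_linear_part J A = (1/2) *\<^sub>R (W + J ** W ** J)" by simp
    then have "norm (A - complex_linear_part J A) = norm (W + J ** W ** J) / 2" by simp
    then have "norm (A - complex_linear_part J A) \<le> norm W + norm (J ** W ** J)"
      using norm_triangle_ineq[of W "J ** W ** J"] norm_ge_zero[of W] norm_ge_zero[of "J ** W ** J"]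
      by linarith
    also have "norm (J ** W ** J) \<le> norm (J ** W) * norm J * K" by (rule K(1))
    also have "\<dots> \<le> (norm J * norm W * K) * norm J * K" using K by (intro mult_right_mono) auto
    finally show ?thesis unfolding C_def W_def by (simp add: algebra_simps)
  qed
  moreover have "C \<ge> 0" unfolding C_def using K(2) by simp
  ultimately show ?thesis using that by blast
qed

section \<open>Invariance of \<open>C\<close> under the gauged flow\<close>

lemma matrix_ode_inverse:
  fixes g h A :: "real \<Rightarrow> 'n::finite endo"
  assumes I: "is_interval I" and t0: "t0 \<in> I" and gh0: "g t0 ** h t0 = mat 1"
    and hd: "\<forall>s\<in>I. (h has_vector_derivative - (A s ** h s)) (at s within I)"
    and gd: "\<forall>s\<in>I. (g has_vector_derivative g s ** A s) (at s within I)"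
  shows "\<forall>s\<in>I. g s ** h s = mat 1"
proof -
  have "\<forall>s\<in>I. g s ** h s - mat 1 = 0"
  proof (rule bilinear_ode_vanishing[OF bounded_bilinear_matrix_mult I t0 continuous_on_const])
    show "g t0 ** h t0 - mat 1 = 0" using gh0 by simp
    show "\<forall>s\<in>I. ((\<lambda>s. g s ** h s - mat 1) has_vector_derivative 0 ** (g s ** h s - mat 1)) (at s within I)"
    proof
      fix s assume s: "s \<in> I"
      from bounded_bilinear.has_vector_derivative[OF bounded_bilinear_matrix_mult gd[rule_format, OF s] hd[rule_format, OF s]]
      show "((\<lambda>s. g s ** h s - mat 1) has_vector_derivative 0 ** (g s ** h s - mat 1)) (at s within I)"
        by (auto intro!: derivative_eq_intros simp: matrix_mult_bilinear_simps matrix_mul_assoc)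
    qed
  qed
  then show ?thesis by simp
qed

lemma matrix_ode_commute:
  fixes k B :: "real \<Rightarrow> 'n::finite endo"
  assumes I: "is_interval I" and t0: "t0 \<in> I" and Bc: "continuous_on I B"
    and BJ: "\<forall>s\<in>I. B s ** J = J ** B s" and kJ0: "k t0 ** J = J ** k t0"
    and kd: "(\<forall>s\<in>I. (k has_vector_derivative B s ** k s) (at s within I)) \<or>
             (\<forall>s\<in>I. (k has_vector_derivative k s ** B s) (at s within I))"
  shows "\<forall>s\<in>I. k s ** J = J ** k s"
proof -
  have comm_deriv: "((\<lambda>s. k s ** J - J ** k s) has_vector_derivative K ** J - J ** K) (at s within I)"
    if "(k has_vector_derivative K) (at s within I)" for s K
    using bounded_bilinear.has_vector_derivative[OF bounded_bilinear_matrix_mult that has_vector_derivative_const[of J]]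
      bounded_bilinear.has_vector_derivative[OF bounded_bilinear_matrix_mult has_vector_derivative_const[of J] that]
    by (auto intro: has_vector_derivative_diff)
  have "\<forall>s\<in>I. k s ** J - J ** k s = 0"
    using kd
  proof
    assume kd: "\<forall>s\<in>I. (k has_vector_derivative B s ** k s) (at s within I)"
    show ?thesis
    proof (rule bilinear_ode_vanishing[OF bounded_bilinear_matrix_mult I t0 Bc])
      show "\<forall>s\<in>I. ((\<lambda>s. k s ** J - J ** k s) has_vector_derivative B s ** (k s ** J - J ** k s)) (at s within I)"
      proof
        fix s assume s: "s \<in> I"
        have "B s ** (k s ** J - J ** k s) = (B s ** k s) ** J - J ** (B s ** k s)"
          using BJ s by (simp add: matrix_mult_bilinear_simps matrix_mul_assoc)
        then show "((\<lambda>s. k s ** J - J ** k s) has_vector_derivative B s ** (k s ** J - J ** k s)) (at s within I)"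
          using comm_deriv[OF kd[rule_format, OF s]] by simp
      qed
    qed (use kJ0 in simp)
  next
    assume kd: "\<forall>s\<in>I. (k has_vector_derivative k s ** B s) (at s within I)"
    show ?thesis
    proof (rule bilinear_ode_vanishing[OF bounded_bilinear.flip[OF bounded_bilinear_matrix_mult] I t0 Bc])
      show "\<forall>s\<in>I. ((\<lambda>s. k s ** J - J ** k s) has_vector_derivative (k s ** J - J ** k s) ** B s) (at s within I)"
      proof
        fix s assume s: "s \<in> I"
        have "(k s ** J - J ** k s) ** B s = (k s ** B s) ** J - J ** (k s ** B s)"
          using BJ s by (simp add: matrix_mult_bilinear_simps matrix_mul_assoc[symmetric])
        then show "((\<lambda>s. k s ** J - J ** k s) has_vector_derivative (k s ** J - J ** k s) ** B s) (at s within I)"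
          using comm_deriv[OF kd[rule_format, OF s]] by simp
      qed
    qed (use kJ0 in simp)
  qed
  then show ?thesis by simp
qed

text \<open>A bracket flow whose generator commutes with \<open>J\<close> is a curve \<open>h \<cdot> \<nu>\<^sub>0\<close> with \<open>h\<close>
  commuting with \<open>J\<close>, so it stays in \<open>C\<close>.\<close>

lemma bracket_flow_commuting_Cset:
  fixes J :: "'n::finite endo"
  assumes I: "is_interval I" and t0: "t0 \<in> I"
    and Ac: "continuous_on I A" and AJ: "\<forall>s\<in>I. A s ** J = J ** A s" and C0: "\<nu>\<^sub>0 \<in> Cset J"
  obtains \<xi> where "\<xi> t0 = \<nu>\<^sub>0" "\<forall>s\<in>I. \<xi> s \<in> Cset J"
    "\<forall>s\<in>I. (\<xi> has_vector_derivative - piop (A s) (\<xi> s)) (at s within I)"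
proof -
  obtain h where h0: "h t0 = mat 1" and hd: "\<forall>s\<in>I. (h has_vector_derivative (- A s) ** h s) (at s within I)"
    using bilinear_ode_exists[OF bounded_bilinear_matrix_mult I t0 continuous_on_minus[OF Ac]] by blast
  then have hd: "\<forall>s\<in>I. (h has_vector_derivative - (A s ** h s)) (at s within I)"
    by (simp add: matrix_mult_bilinear_simps)
  obtain g where g0: "g t0 = mat 1" and gd: "\<forall>s\<in>I. (g has_vector_derivative g s ** A s) (at s within I)"
    using bilinear_ode_exists[OF bounded_bilinear.flip[OF bounded_bilinear_matrix_mult] I t0 Ac] by blast
  have gh: "\<forall>s\<in>I. g s ** h s = mat 1"
    using matrix_ode_inverse[OF I t0 _ hd gd] g0 h0 by simp
  have gJ: "\<forall>s\<in>I. g s ** J = J ** g s"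
    using matrix_ode_commute[OF I t0 Ac AJ _ disjI2[OF gd]] g0 by simp
  have hJ: "h s ** J = J ** h s" if s: "s \<in> I" for s
  proof -
    have hg: "h s ** g s = mat 1" using gh s matrix_left_right_inverse by blast
    have "h s ** J = h s ** J ** (g s ** h s)" using gh s by simp
    also have "\<dots> = h s ** (g s ** J) ** h s" using gJ s by (simp add: matrix_mul_assoc)
    also have "\<dots> = J ** h s" using hg by (simp add: matrix_mul_assoc)
    finally show ?thesis .
  qed
  show ?thesis
  proof (rule that[of "\<lambda>s. br_transform (h s) (g s) \<nu>\<^sub>0"])
    show "br_transform (h t0) (g t0) \<nu>\<^sub>0 = \<nu>\<^sub>0" using h0 g0 by (simp add: br_transform_id)
    show "\<forall>s\<in>I. br_transform (h s) (g s) \<nu>\<^sub>0 \<in> Cset J"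
      using br_transform_Cset[OF C0] gh gJ hJ by blast
    show "\<forall>s\<in>I. ((\<lambda>s. br_transform (h s) (g s) \<nu>\<^sub>0) has_vector_derivative
                  - piop (A s) (br_transform (h s) (g s) \<nu>\<^sub>0)) (at s within I)"
    proof
      fix s assume s: "s \<in> I"
      show "((\<lambda>s. br_transform (h s) (g s) \<nu>\<^sub>0) has_vector_derivative
              - piop (A s) (br_transform (h s) (g s) \<nu>\<^sub>0)) (at s within I)"
        by (rule br_transform_flow) (use hd gd s in blast)+
    qed
  qed
qed

text \<open>The gauged vector field at \<open>x\<close> is compared with the bracket flow at \<open>y \<in> C\<close> generated by
  the complex linear part of \<open>P\<^sub>x - S x\<close>; since \<open>P\<^sub>y - S y\<close> commutes with \<open>J\<close>, the two generators
  differ by \<open>O(\<parallel>x - y\<parallel>)\<close>.\<close>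

lemma gauged_field_complex_linear_part_estimate:
  fixes J :: "'n::{finite,linorder} endo" and S :: "'n brkt \<Rightarrow> 'n endo"
  assumes J_cplx: "J ** J = - mat 1" and J_orth: "transpose J ** J = mat 1"
    and S_u: "\<forall>\<xi>\<in>Cset J. S \<xi> \<in> ualg J" and S_lip: "Ls-lipschitz_on (cball c r) S"
  obtains L where "\<And>x y. x \<in> cball c r \<Longrightarrow> y \<in> cball c r \<Longrightarrow> y \<in> Cset J \<Longrightarrow>
      norm (piop (Pop x - S x) x - piop (complex_linear_part J (Pop x - S x)) y) \<le> L * norm (x - y)"
proof -
  define A where "A x = Pop x - S x" for x
  obtain Kq where "Kq-lipschitz_on (cball c r) Pop" using Pop_lipschitz_on_cball by blast
  then have A_lip: "(Kq + Ls)-lipschitz_on (cball c r) A"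
    unfolding A_def by (rule lipschitz_on_diff[OF _ S_lip])
  obtain Kp where Kp: "Kp > 0" "\<And>a b. norm (piop a b) \<le> norm a * norm (b::'n brkt) * Kp"
    using bounded_bilinear.pos_bounded[OF bounded_bilinear_piop] by blast
  obtain C where C: "C \<ge> 0"
    "\<And>A Y. Y ** J = J ** Y \<Longrightarrow> norm (A - complex_linear_part J A) \<le> C * norm (A - Y)"
    using norm_diff_complex_linear_part_le[OF J_cplx] by blast
  define M where "M = norm (A c) + (Kq + Ls) * r"
  show ?thesis
  proof (rule that[of "Kp * M + Kp * C * (Kq + Ls) * (norm c + \<bar>r\<bar>)"], fold A_def)
    fix x y assume x: "x \<in> cball c r" and y: "y \<in> cball c r" "y \<in> Cset J"
    have "A y ** J = J ** A y"
      using Pop_commute_J[OF J_orth y(2)] S_u y(2)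
      unfolding A_def ualg_def by (simp add: matrix_mult_bilinear_simps)
    then have "norm (A x - complex_linear_part J (A x)) \<le> C * norm (A x - A y)" by (rule C(2))
    also have "\<dots> \<le> C * ((Kq + Ls) * norm (x - y))"
      using lipschitz_onD[OF A_lip x y(1)] C(1) by (intro mult_left_mono) (auto simp: dist_norm)
    finally have cl: "norm (A x - complex_linear_part J (A x)) \<le> C * ((Kq + Ls) * norm (x - y))" .
    have "piop (A x) x - piop (complex_linear_part J (A x)) y
        = piop (A x) (x - y) + piop (A x - complex_linear_part J (A x)) y"
      by (simp add: bounded_bilinear.diff_left[OF bounded_bilinear_piop]
          bounded_bilinear.diff_right[OF bounded_bilinear_piop])
    then have "norm (piop (A x) x - piop (complex_linear_part J (A x)) y)
        \<le> norm (piop (A x) (x - y)) + norm (piop (A x - complex_linear_part J (A x)) y)"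
      by (simp only: norm_triangle_ineq)
    also have "\<dots> \<le> norm (A x) * norm (x - y) * Kp + norm (A x - complex_linear_part J (A x)) * norm y * Kp"
      using Kp(2) by (intro add_mono)
    also have "\<dots> \<le> M * norm (x - y) * Kp + (C * ((Kq + Ls) * norm (x - y))) * (norm c + \<bar>r\<bar>) * Kp"
      using lipschitz_on_cball_norm_bound[OF A_lip x] cl norm_le_of_mem_cball[OF y(1)] Kp(1) C(1)
        lipschitz_on_nonneg[OF A_lip] unfolding M_def
      by (intro add_mono mult_right_mono mult_mono) auto
    finally show "norm (piop (A x) x - piop (complex_linear_part J (A x)) y)
        \<le> (Kp * M + Kp * C * (Kq + Ls) * (norm c + \<bar>r\<bar>)) * norm (x - y)"
      by (simp add: algebra_simps)
  qed
qed

lemma Cset_locally_invariant: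
  fixes J :: "'n::{finite,linorder} endo" and S :: "'n brkt \<Rightarrow> 'n endo" and \<nu> :: "real \<Rightarrow> 'n brkt"
  assumes J_cplx: "J ** J = - mat 1" and J_orth: "transpose J ** J = mat 1"
    and S_u: "\<forall>\<xi>\<in>Cset J. S \<xi> \<in> ualg J"
    and S_lip: "\<forall>\<xi>\<in>Cset J. \<exists>r>0. \<exists>L. L-lipschitz_on (cball \<xi> r) S"
    and I: "is_interval I"
    and flow: "\<forall>t\<in>I. (\<nu> has_vector_derivative - piop (Pop (\<nu> t) - S (\<nu> t)) (\<nu> t)) (at t within I)"
    and t1: "t1 \<in> I" and C1: "\<nu> t1 \<in> Cset J"
  shows "\<exists>\<delta>>0. \<forall>s\<in>I. dist s t1 < \<delta> \<longrightarrow> \<nu> s \<in> Cset J"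
proof -
  obtain r Ls where r: "r > 0" and Ls: "Ls-lipschitz_on (cball (\<nu> t1) r) S"
    using S_lip C1 by blast
  obtain L where L: "\<And>x y. x \<in> cball (\<nu> t1) r \<Longrightarrow> y \<in> cball (\<nu> t1) r \<Longrightarrow> y \<in> Cset J \<Longrightarrow>
      norm (piop (Pop x - S x) x - piop (complex_linear_part J (Pop x - S x)) y) \<le> L * norm (x - y)"
    using gauged_field_complex_linear_part_estimate[OF J_cplx J_orth S_u Ls] by blast
  have \<nu>c: "continuous_on I \<nu>" by (rule has_vector_derivative_imp_continuous_on[OF flow])
  obtain \<delta>1 where "\<delta>1 > 0" and \<delta>1: "\<forall>s\<in>I. dist s t1 < \<delta>1 \<longrightarrow> dist (\<nu> s) (\<nu> t1) < r"
    using \<nu>c t1 r unfolding continuous_on_iff by blast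
  define I1 where "I1 = {s\<in>I. dist s t1 < \<delta>1}"
  have I1: "is_interval I1" "t1 \<in> I1" "I1 \<subseteq> I"
    unfolding I1_def using is_interval_restrict_ball[OF I] t1 \<open>\<delta>1 > 0\<close> by auto
  have \<nu>_ball: "\<nu> s \<in> cball (\<nu> t1) r" if "s \<in> I1" for s
    using \<delta>1 that unfolding I1_def by (auto simp: dist_commute less_imp_le)
  define A where "A s = complex_linear_part J (Pop (\<nu> s) - S (\<nu> s))" for s
  have "continuous_on I1 (\<lambda>s. S (\<nu> s))"
    using continuous_on_compose2[OF lipschitz_on_continuous_on[OF Ls] continuous_on_subset[OF \<nu>c I1(3)]]
      \<nu>_ball by blast
  then have Ac: "continuous_on I1 A"
    unfolding A_def complex_linear_part_def Pop_eq_Pop_polar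
    using continuous_on_subset[OF \<nu>c I1(3)]
    by (intro continuous_intros bounded_bilinear.continuous_on[OF bounded_bilinear_Pop_polar]
        bounded_bilinear.continuous_on[OF bounded_bilinear_matrix_mult])
  obtain \<xi> where \<xi>1: "\<xi> t1 = \<nu> t1" and \<xi>C: "\<forall>s\<in>I1. \<xi> s \<in> Cset J"
    and \<xi>d: "\<forall>s\<in>I1. (\<xi> has_vector_derivative - piop (A s) (\<xi> s)) (at s within I1)"
    using bracket_flow_commuting_Cset[OF I1(1,2) Ac _ C1] complex_linear_part_commute[OF J_cplx]
    unfolding A_def by blast
  obtain \<delta>2 where "\<delta>2 > 0" and \<delta>2: "\<forall>s\<in>I1. dist s t1 < \<delta>2 \<longrightarrow> dist (\<xi> s) (\<nu> t1) < r"
    using has_vector_derivative_imp_continuous_on[OF \<xi>d] I1(2) r \<xi>1 unfolding continuous_on_iff by metis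
  define I2 where "I2 = {s\<in>I. dist s t1 < min \<delta>1 \<delta>2}"
  have I2: "is_interval I2" "t1 \<in> I2" "I2 \<subseteq> I1"
    unfolding I2_def I1_def using is_interval_restrict_ball[OF I, of t1 "min \<delta>1 \<delta>2"] t1 \<open>\<delta>1 > 0\<close> \<open>\<delta>2 > 0\<close>
    by auto
  have \<xi>_ball: "\<xi> s \<in> cball (\<nu> t1) r" if "s \<in> I2" for s
    using \<delta>2 that I2(3) unfolding I2_def by (auto simp: dist_commute less_imp_le)
  have "\<forall>s\<in>I2. \<nu> s - \<xi> s = 0"
  proof (rule gronwall_vanishing[OF I2(1,2)])
    show "\<nu> t1 - \<xi> t1 = 0" using \<xi>1 by simp
    show "\<forall>s\<in>I2. ((\<lambda>s. \<nu> s - \<xi> s) has_vector_derivative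
              - piop (Pop (\<nu> s) - S (\<nu> s)) (\<nu> s) - - piop (A s) (\<xi> s)) (at s within I2)"
      using flow \<xi>d I2(3) I1(3)
      by (blast intro: has_vector_derivative_diff has_vector_derivative_within_subset)
    have "norm (- piop (Pop (\<nu> s) - S (\<nu> s)) (\<nu> s) - - piop (A s) (\<xi> s)) \<le> L * norm (\<nu> s - \<xi> s)"
      if "s \<in> I2" for s
      using L[OF \<nu>_ball \<xi>_ball \<xi>C[rule_format]] that I2(3) unfolding A_def
      by (auto simp: norm_minus_commute)
    then show "\<forall>t\<in>I2. \<exists>\<delta>>0. \<exists>L. \<forall>s\<in>I2. dist s t < \<delta> \<longrightarrow>
        norm (- piop (Pop (\<nu> s) - S (\<nu> s)) (\<nu> s) - - piop (A s) (\<xi> s)) \<le> L * norm (\<nu> s - \<xi> s)"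
      by (intro ballI exI[of _ 1] exI[of _ L]) auto
  qed
  then have "\<forall>s\<in>I. dist s t1 < min \<delta>1 \<delta>2 \<longrightarrow> \<nu> s \<in> Cset J"
    using \<xi>C I2(3) unfolding I2_def by auto
  then show ?thesis using \<open>\<delta>1 > 0\<close> \<open>\<delta>2 > 0\<close> by (intro exI[of _ "min \<delta>1 \<delta>2"]) auto
qed

lemma Cset_invariant:
  fixes J :: "'n::{finite,linorder} endo" and S :: "'n brkt \<Rightarrow> 'n endo" and \<nu> :: "real \<Rightarrow> 'n brkt"
  assumes J_cplx: "J ** J = - mat 1" and J_orth: "transpose J ** J = mat 1"
    and S_u: "\<forall>\<xi>\<in>Cset J. S \<xi> \<in> ualg J"
    and S_lip: "\<forall>\<xi>\<in>Cset J. \<exists>r>0. \<exists>L. L-lipschitz_on (cball \<xi> r) S"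
    and I: "is_interval I"
    and flow: "\<forall>t\<in>I. (\<nu> has_vector_derivative - piop (Pop (\<nu> t) - S (\<nu> t)) (\<nu> t)) (at t within I)"
    and t0: "t0 \<in> I" and C0: "\<nu> t0 \<in> Cset J"
  shows "\<forall>t\<in>I. \<nu> t \<in> Cset J"
proof -
  define Z where "Z = I \<inter> \<nu> -` Cset J"
  have "closedin (top_of_set I) Z"
    unfolding Z_def
    by (rule continuous_closedin_preimage[OF has_vector_derivative_imp_continuous_on[OF flow] closed_Cset])
  moreover have "openin (top_of_set I) Z"
    unfolding openin_euclidean_subtopology_iff Z_def
    using Cset_locally_invariant[OF J_cplx J_orth S_u S_lip I flow] by auto
  ultimately have "Z = {} \<or> Z = I"
    using is_interval_connected[OF I] unfolding connected_clopen by blast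
  then show ?thesis using t0 C0 unfolding Z_def by auto
qed

section \<open>Gauging away \<open>S\<close>\<close>

lemma unitary_gauge_exists:
  fixes J :: "'n::finite endo" and B :: "real \<Rightarrow> 'n endo"
  assumes I: "is_interval I" and t0: "t0 \<in> I"
    and Bc: "continuous_on I B" and Bu: "\<forall>t\<in>I. B t \<in> ualg J"
  obtains k where "k t0 = mat 1" "\<forall>t\<in>I. (k has_vector_derivative B t ** k t) (at t within I)"
    "\<forall>t\<in>I. k t \<in> Ugrp J"
proof -
  obtain k where k0: "k t0 = mat 1" and kd: "\<forall>t\<in>I. (k has_vector_derivative B t ** k t) (at t within I)"
    using bilinear_ode_exists[OF bounded_bilinear_matrix_mult I t0 Bc] by blast
  have "\<forall>t\<in>I. ((\<lambda>t. transpose (k t)) has_vector_derivative transpose (k t) ** (- B t)) (at t within I)"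
  proof
    fix t assume t: "t \<in> I"
    have "transpose (B t ** k t) = transpose (k t) ** (- B t)"
      using Bu t by (simp add: ualg_def matrix_transpose_mul)
    then show "((\<lambda>t. transpose (k t)) has_vector_derivative transpose (k t) ** (- B t)) (at t within I)"
      using bounded_linear.has_vector_derivative[OF bounded_linear_transpose kd[rule_format, OF t]] by simp
  qed
  moreover have "\<forall>t\<in>I. (k has_vector_derivative - (- B t ** k t)) (at t within I)"
    using kd by (simp add: matrix_mult_bilinear_simps)
  ultimately have orth: "\<forall>t\<in>I. transpose (k t) ** k t = mat 1"
    using matrix_ode_inverse[OF I t0, of "\<lambda>t. transpose (k t)" k "\<lambda>t. - B t"] k0 by simp
  have "\<forall>t\<in>I. B t ** J = J ** B t" using Bu unfolding ualg_def by blast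
  from matrix_ode_commute[OF I t0 Bc this _ disjI1[OF kd]]
  have "\<forall>t\<in>I. k t ** J = J ** k t" using k0 by simp
  moreover have "\<forall>t\<in>I. invertible (k t)"
    using orth matrix_left_right_inverse unfolding invertible_def by blast
  ultimately show ?thesis using that k0 kd orth unfolding Ugrp_def by blast
qed

text \<open>The derivative of \<open>k\<close> acting on \<open>\<nu>\<close> cancels the gauge term \<open>\<pi>(B) \<nu>\<close>, and \<open>P\<close> is
  equivariant under orthogonal maps.\<close>

lemma bracket_flow_gauge_transform:
  fixes k B :: "real \<Rightarrow> 'n::{finite,linorder} endo" and \<nu> :: "real \<Rightarrow> 'n brkt"
  assumes kd: "(k has_vector_derivative B t ** k t) (at t within I)"
    and \<nu>d: "(\<nu> has_vector_derivative - piop (Pop (\<nu> t) - B t) (\<nu> t)) (at t within I)"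
    and k_orth: "transpose (k t) ** k t = mat 1" and B_skew: "transpose (B t) = - B t"
    and sk: "is_bracket (\<nu> t)"
  defines "\<mu> \<equiv> \<lambda>t. br_transform (transpose (k t)) (k t) (\<nu> t)"
  shows "(\<mu> has_vector_derivative - piop (Pop (\<mu> t)) (\<mu> t)) (at t within I)"
proof -
  define kt where "kt = k t"
  define P where "P = Pop (\<nu> t)"
  have k_orth': "kt ** transpose kt = mat 1"
    using matrix_left_right_inverse[THEN iffD1, OF k_orth] unfolding kt_def .
  then have kk: "kt *v (transpose kt *v x) = x" for x by (simp add: matrix_vector_mul_assoc)
  have "transpose (transpose kt) ** transpose kt = mat 1" using k_orth' by simp
  from Pop_br_transform[OF this sk]
  have P\<mu>: "Pop (\<mu> t) = transpose kt ** P ** kt" unfolding \<mu>_def kt_def P_def by simp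
  have tBk: "transpose (B t ** kt) = - (transpose kt ** B t)"
    using B_skew by (simp add: matrix_transpose_mul matrix_mult_bilinear_simps)
  have "((\<lambda>t. transpose (k t)) has_vector_derivative transpose (B t ** k t)) (at t within I)"
    using bounded_linear.has_vector_derivative[OF bounded_linear_transpose kd] .
  from br_transform_has_vector_derivative[OF this kd \<nu>d]
  have "(\<mu> has_vector_derivative
      mkbr (\<lambda>x y. transpose (B t ** kt) *v br (\<nu> t) (kt *v x) (kt *v y)
          + transpose kt *v br (- piop (P - B t) (\<nu> t)) (kt *v x) (kt *v y)
          + transpose kt *v br (\<nu> t) ((B t ** kt) *v x) (kt *v y)
          + transpose kt *v br (\<nu> t) (kt *v x) ((B t ** kt) *v y))) (at t within I)"
    unfolding \<mu>_def kt_def P_def .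
  also have "mkbr (\<lambda>x y. transpose (B t ** kt) *v br (\<nu> t) (kt *v x) (kt *v y)
          + transpose kt *v br (- piop (P - B t) (\<nu> t)) (kt *v x) (kt *v y)
          + transpose kt *v br (\<nu> t) ((B t ** kt) *v x) (kt *v y)
          + transpose kt *v br (\<nu> t) (kt *v x) ((B t ** kt) *v y))
        = mkbr (br (- piop (Pop (\<mu> t)) (\<mu> t)))"
    unfolding P\<mu> tBk
    by (rule arg_cong[where f=mkbr], intro ext)
      (simp add: \<mu>_def kt_def[symmetric] br_piop br_br_transform br_lin matrix_vector_mult_bilinear_simps
        matrix_vector_mul_assoc[symmetric] kk algebra_simps)
  finally show ?thesis by (simp only: mkbr_br)
qed

lemma gauged_flow_Ck_curve:
  fixes S :: "'n::{finite,linorder} brkt \<Rightarrow> 'n endo" and \<nu> :: "real \<Rightarrow> 'n brkt"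
  assumes U: "open U" and D: "smooth_derivs U D" "D [] = S" and \<nu>U: "\<forall>t\<in>I. \<nu> t \<in> U"
    and flow: "\<forall>t\<in>I. (\<nu> has_vector_derivative - piop (Pop (\<nu> t) - S (\<nu> t)) (\<nu> t)) (at t within I)"
  shows "Ck_curve m I \<nu>"
proof (induction m)
  case 0 show ?case by (rule Ck_curve_0)
next
  case (Suc m)
  have "Ck_curve m I (\<lambda>t. Pop (\<nu> t))"
    unfolding Pop_eq_Pop_polar by (rule Ck_curve_bilinear[OF bounded_bilinear_Pop_polar Suc Suc])
  moreover have "Ck_curve m I (\<lambda>t. S (\<nu> t))"
    using Ck_curve_compose_smooth[OF U \<nu>U Suc D(1)] unfolding D(2) .
  ultimately have "Ck_curve m I (\<lambda>t. - piop (Pop (\<nu> t) - S (\<nu> t)) (\<nu> t))"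
    by (intro Ck_curve_minus Ck_curve_bilinear[OF bounded_bilinear_piop] Ck_curve_diff Suc)
  then show ?case unfolding Ck_curve_Suc using flow
    by (intro exI[of _ "\<lambda>t. - piop (Pop (\<nu> t) - S (\<nu> t)) (\<nu> t)"]) blast
qed

theorem theorem2p2:
  fixes J :: "'n::{finite,linorder} endo"
    and S :: "'n brkt \<Rightarrow> 'n endo"
    and \<mu> :: "'n brkt"
    and \<nu> :: "real \<Rightarrow> 'n brkt"
    and I :: "real set"
  assumes J_cplx: "J ** J = - mat 1"
    and J_orth: "transpose J ** J = mat 1"
    and mu_C: "\<mu> \<in> Cset J"
    and S_smooth: "\<exists>U. Cset J \<subseteq> U \<and> smooth_on U S"
    and S_u: "\<forall>\<xi>\<in>Cset J. S \<xi> \<in> ualg J"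
    and I_int: "is_interval I" and I0: "0 \<in> I"
    and nu_init: "\<nu> 0 = \<mu>"
    and nu_flow: "\<forall>t\<in>I. (\<nu> has_vector_derivative
                     - piop (Pop (\<nu> t) - S (\<nu> t)) (\<nu> t)) (at t within I)"
  shows "\<exists>k :: real \<Rightarrow> 'n endo. \<exists>\<mu>t :: real \<Rightarrow> 'n brkt.
           smooth_curve I k \<and> (\<forall>t\<in>I. k t \<in> Ugrp J) \<and>
           \<mu>t 0 = \<mu> \<and>
           (\<forall>t\<in>I. (\<mu>t has_vector_derivative - piop (Pop (\<mu>t t)) (\<mu>t t)) (at t within I)) \<and>
           (\<forall>t\<in>I. \<nu> t = act (k t) (\<mu>t t))"
proof -
  obtain U D where CU: "Cset J \<subseteq> U" and U: "open U" and D: "D [] = S" "smooth_derivs U D"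
    using S_smooth by (auto elim: smooth_onE)
  have "\<forall>\<xi>\<in>Cset J. \<exists>r>0. \<exists>L. L-lipschitz_on (cball \<xi> r) S"
    using smooth_derivs_lipschitz_cball[OF U D(2)] CU D(1) by blast
  from Cset_invariant[OF J_cplx J_orth S_u this I_int nu_flow I0]
  have \<nu>C: "\<forall>t\<in>I. \<nu> t \<in> Cset J" using nu_init mu_C by simp
  have SCk: "Ck_curve m I (\<lambda>t. S (\<nu> t))" for m
    using Ck_curve_compose_smooth[OF U _ gauged_flow_Ck_curve[OF U D(2,1) _ nu_flow] D(2)] \<nu>C CU D(1) by auto
  moreover have "\<forall>t\<in>I. S (\<nu> t) \<in> ualg J" using S_u \<nu>C by blast
  ultimately obtain k where k0: "k 0 = mat 1" and kU: "\<forall>t\<in>I. k t \<in> Ugrp J"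
    and kd: "\<forall>t\<in>I. (k has_vector_derivative S (\<nu> t) ** k t) (at t within I)"
    using unitary_gauge_exists[OF I_int I0 Ck_curve_continuous_on] by metis
  define \<mu>t where "\<mu>t t = br_transform (transpose (k t)) (k t) (\<nu> t)" for t
  have "smooth_curve I k"
    using smooth_curve_if_Ck_curve[OF I_int] bilinear_ode_Ck_curve[OF bounded_bilinear_matrix_mult SCk kd]
    by blast
  moreover have "(\<mu>t has_vector_derivative - piop (Pop (\<mu>t t)) (\<mu>t t)) (at t within I)"
    if t: "t \<in> I" for t
    using bracket_flow_gauge_transform[where B="\<lambda>t. S (\<nu> t)", OF kd[rule_format, OF t] nu_flow[rule_format, OF t]]
      kU S_u \<nu>C t
    unfolding \<mu>t_def[abs_def] Ugrp_def ualg_def Cset_def by blast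
  moreover have "\<nu> t = act (k t) (\<mu>t t)" if "t \<in> I" for t
    using kU that unfolding \<mu>t_def Ugrp_def by (simp add: act_br_transform_transpose)
  moreover have "\<mu>t 0 = \<mu>" using k0 nu_init by (simp add: \<mu>t_def br_transform_id)
  ultimately show ?thesis using kU by blast
qed

end
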